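(* Let $M$ be a Poisson manifold with a local star product $*$ and let $\omega:C^\infty_0(M)[[\lambda]]\to\mathbb C[[\lambda]]$ be a positive $\mathbb C[[\lambda]]$-linear functional with GNS representation $\pi_\omega$ of $C^\infty(M)[[\lambda]]$. Then $\pi_\omega$ is faithful (i.e. injective) if and only if $\omega$ is faithful.
   Context: $C^\infty(M)$ denotes complex-valued smooth functions and $\lambda$ is a formal parameter. A (local) star product $*$ on $M$ is an associative $\mathbb C[[\lambda]]$-bilinear product on $C^\infty(M)[[\lambda]]$ with $f*g=\sum_{r\ge0}\lambda^rM_r(f,g)$ for $f,g\in C^\infty(M)$, where the $M_r$ are local operators, $M_0(f,g)=fg$, $M_1(f,g)-M_1(g,f)=\mathrm i\{f,g\}$, $M_r$ vanishes on constants for $r\ge1$, and $\overline{f*g}=\bar g*\bar f$ ($\bar\lambda=\lambda$). $C^\infty_0(M)[[\lambda]]$ is the set of formal series whose coefficients have compact support. $\mathbb R[[\lambda]]$ is ordered by: $a>0$ iff its lowest-order nonzero coefficient is positive; $\omega$ is positive if $\omega(\bar f*f)\ge0$ for all $f$, and faithful if $\mathcal J_\omega=\{f\in C^\infty_0(M)[[\lambda]]:\omega(\bar f*f)=0\}=\{0\}$. The GNS representation is $\pi_\omega:C^\infty(M)[[\lambda]]\to\operatorname{End}(\mathfrak H_\omega)$, $\pi_\omega(f)\psi_g=\psi_{f*g}$, on $\mathfrak H_\omega=C^\infty_0(M)[[\lambda]]/\mathcal J_\omega$ with classes $\psi_g$. *)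

theory Defs
  imports "HOL-Analysis.Analysis" "HOL-Computational_Algebra.Formal_Power_Series"
begin

text \<open>Coinductive = every order of differentiability.\<close>
coinductive smooth_on :: "'e::euclidean_space set \<Rightarrow> ('e \<Rightarrow> 'b::real_normed_vector) \<Rightarrow> bool"
  for U where
  smooth_onI: "\<lbrakk> \<forall>x\<in>U. f differentiable (at x);
     \<forall>b\<in>Basis. smooth_on U (\<lambda>x. frechet_derivative f (at x) b) \<rbrakk> \<Longrightarrow> smooth_on U f"

definition smooth_atlas :: "('m::topological_space set \<times> ('m \<Rightarrow> 'e::euclidean_space)) set \<Rightarrow> bool" where
  "smooth_atlas A \<longleftrightarrow>
     \<Union>(fst ` A) = UNIV \<and>
     (\<forall>(U,\<phi>)\<in>A. open U \<and> open (\<phi> ` U) \<and> homeomorphism U (\<phi> ` U) \<phi> (inv_into U \<phi>)) \<and>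
     (\<forall>(U,\<phi>)\<in>A. \<forall>(V,\<psi>)\<in>A. smooth_on (\<phi> ` (U \<inter> V)) (\<psi> \<circ> inv_into U \<phi>))"

definition smooth_fun :: "('m::topological_space set \<times> ('m \<Rightarrow> 'e::euclidean_space)) set \<Rightarrow> ('m \<Rightarrow> complex) \<Rightarrow> bool" where
  "smooth_fun A f \<longleftrightarrow> (\<forall>(U,\<phi>)\<in>A. smooth_on (\<phi> ` U) (f \<circ> inv_into U \<phi>))"

definition supp :: "('m::topological_space \<Rightarrow> complex) \<Rightarrow> 'm set" where
  "supp f = closure {x. f x \<noteq> 0}"

definition poisson_bracket ::
  "('m::topological_space set \<times> ('m \<Rightarrow> 'e::euclidean_space)) set \<Rightarrow>
   (('m \<Rightarrow> complex) \<Rightarrow> ('m \<Rightarrow> complex) \<Rightarrow> ('m \<Rightarrow> complex)) \<Rightarrow> bool" where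
  "poisson_bracket A pb \<longleftrightarrow>
    (\<forall>f g h (a::complex). smooth_fun A f \<longrightarrow> smooth_fun A g \<longrightarrow> smooth_fun A h \<longrightarrow>
       smooth_fun A (pb f g) \<and>
       pb (\<lambda>x. a * f x + g x) h = (\<lambda>x. a * pb f h x + pb g h x) \<and>
       pb f g = (\<lambda>x. - pb g f x) \<and>
       pb f (\<lambda>x. g x * h x) = (\<lambda>x. pb f g x * h x + g x * pb f h x) \<and>
       (\<lambda>x. pb f (pb g h) x + pb g (pb h f) x + pb h (pb f g) x) = (\<lambda>x. 0) \<and>
       (\<lambda>x. cnj (pb f g x)) = pb (\<lambda>x. cnj (f x)) (\<lambda>x. cnj (g x)))"

text \<open>An element of C-infinity(M)[[lambda]] is represented by its sequence of coefficients.\<close>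
type_synonym 'm fseries = "nat \<Rightarrow> 'm \<Rightarrow> complex"

definition smooth_series :: "('m::topological_space set \<times> ('m \<Rightarrow> 'e::euclidean_space)) set \<Rightarrow> 'm fseries set" where
  "smooth_series A = {F. \<forall>n. smooth_fun A (F n)}"

definition compact_series :: "('m::topological_space set \<times> ('m \<Rightarrow> 'e::euclidean_space)) set \<Rightarrow> 'm fseries set" where
  "compact_series A = {F. \<forall>n. smooth_fun A (F n) \<and> compact (supp (F n))}"

text \<open>The C[[lambda]]-bilinear extension of f * g = sum_r lambda^r M_r(f,g).\<close>
definition star :: "(nat \<Rightarrow> ('m \<Rightarrow> complex) \<Rightarrow> ('m \<Rightarrow> complex) \<Rightarrow> ('m \<Rightarrow> complex)) \<Rightarrow>
                    'm fseries \<Rightarrow> 'm fseries \<Rightarrow> 'm fseries" where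
  "star Mr F G = (\<lambda>n x. \<Sum>r\<le>n. \<Sum>s\<le>n - r. Mr r (F s) (G (n - r - s)) x)"

definition series_cnj :: "'m fseries \<Rightarrow> 'm fseries" where
  "series_cnj F = (\<lambda>n x. cnj (F n x))"

definition series_add :: "'m fseries \<Rightarrow> 'm fseries \<Rightarrow> 'm fseries" where
  "series_add F G = (\<lambda>n x. F n x + G n x)"

definition series_diff :: "'m fseries \<Rightarrow> 'm fseries \<Rightarrow> 'm fseries" where
  "series_diff F G = (\<lambda>n x. F n x - G n x)"

definition series_scale :: "complex fps \<Rightarrow> 'm fseries \<Rightarrow> 'm fseries" where
  "series_scale a F = (\<lambda>n x. \<Sum>k\<le>n. fps_nth a k * F (n - k) x)"

definition local_star_product ::
  "('m::topological_space set \<times> ('m \<Rightarrow> 'e::euclidean_space)) set \<Rightarrow>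
   (('m \<Rightarrow> complex) \<Rightarrow> ('m \<Rightarrow> complex) \<Rightarrow> ('m \<Rightarrow> complex)) \<Rightarrow>
   (nat \<Rightarrow> ('m \<Rightarrow> complex) \<Rightarrow> ('m \<Rightarrow> complex) \<Rightarrow> ('m \<Rightarrow> complex)) \<Rightarrow> bool" where
  "local_star_product A pb Mr \<longleftrightarrow>
    \<comment> \<open>each M_r is a C-bilinear operator on smooth functions\<close>
    (\<forall>r f g h (a::complex). smooth_fun A f \<longrightarrow> smooth_fun A g \<longrightarrow> smooth_fun A h \<longrightarrow>
       smooth_fun A (Mr r f g) \<and>
       Mr r (\<lambda>x. a * f x + g x) h = (\<lambda>x. a * Mr r f h x + Mr r g h x) \<and>
       Mr r h (\<lambda>x. a * f x + g x) = (\<lambda>x. a * Mr r h f x + Mr r h g x)) \<and>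
    \<comment> \<open>locality: M_r does not increase supports\<close>
    (\<forall>r f g. smooth_fun A f \<longrightarrow> smooth_fun A g \<longrightarrow>
       supp (Mr r f g) \<subseteq> supp f \<inter> supp g) \<and>
    \<comment> \<open>M_0 is the pointwise product\<close>
    (\<forall>f g. smooth_fun A f \<longrightarrow> smooth_fun A g \<longrightarrow> Mr 0 f g = (\<lambda>x. f x * g x)) \<and>
    \<comment> \<open>M_1(f,g) - M_1(g,f) = i {f,g}\<close>
    (\<forall>f g. smooth_fun A f \<longrightarrow> smooth_fun A g \<longrightarrow>
       (\<lambda>x. Mr 1 f g x - Mr 1 g f x) = (\<lambda>x. \<i> * pb f g x)) \<and>
    \<comment> \<open>M_r vanishes on constants for r >= 1\<close>
    (\<forall>r f (c::complex). r \<ge> 1 \<longrightarrow> smooth_fun A f \<longrightarrow>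
       Mr r (\<lambda>x. c) f = (\<lambda>x. 0) \<and> Mr r f (\<lambda>x. c) = (\<lambda>x. 0)) \<and>
    \<comment> \<open>Hermiticity: conj (f * g) = conj g * conj f\<close>
    (\<forall>r f g. smooth_fun A f \<longrightarrow> smooth_fun A g \<longrightarrow>
       (\<lambda>x. cnj (Mr r f g x)) = Mr r (\<lambda>x. cnj (g x)) (\<lambda>x. cnj (f x))) \<and>
    \<comment> \<open>associativity on C-infinity(M)[[lambda]]\<close>
    (\<forall>F G H. F \<in> smooth_series A \<longrightarrow> G \<in> smooth_series A \<longrightarrow> H \<in> smooth_series A \<longrightarrow>
       star Mr (star Mr F G) H = star Mr F (star Mr G H))"

text \<open>Order on R[[lambda]] (viewed inside C[[lambda]]): a \<ge> 0 iff a has real coefficients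
  and either a = 0 or its lowest-order nonzero coefficient is positive.\<close>
definition fps_nonneg :: "complex fps \<Rightarrow> bool" where
  "fps_nonneg a \<longleftrightarrow> (\<forall>n. Im (fps_nth a n) = 0) \<and> (a = 0 \<or> Re (fps_nth a (subdegree a)) > 0)"

definition positive_functional ::
  "('m::topological_space set \<times> ('m \<Rightarrow> 'e::euclidean_space)) set \<Rightarrow>
   (nat \<Rightarrow> ('m \<Rightarrow> complex) \<Rightarrow> ('m \<Rightarrow> complex) \<Rightarrow> ('m \<Rightarrow> complex)) \<Rightarrow>
   ('m fseries \<Rightarrow> complex fps) \<Rightarrow> bool" where
  "positive_functional A Mr \<omega> \<longleftrightarrow>
    (\<forall>F\<in>compact_series A. \<forall>G\<in>compact_series A. \<forall>a.
       \<omega> (series_add (series_scale a F) G) = a * \<omega> F + \<omega> G) \<and>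
    (\<forall>F\<in>compact_series A. fps_nonneg (\<omega> (star Mr (series_cnj F) F)))"

definition gns_ideal ::
  "('m::topological_space set \<times> ('m \<Rightarrow> 'e::euclidean_space)) set \<Rightarrow>
   (nat \<Rightarrow> ('m \<Rightarrow> complex) \<Rightarrow> ('m \<Rightarrow> complex) \<Rightarrow> ('m \<Rightarrow> complex)) \<Rightarrow>
   ('m fseries \<Rightarrow> complex fps) \<Rightarrow> 'm fseries set" where
  "gns_ideal A Mr \<omega> = {F \<in> compact_series A. \<omega> (star Mr (series_cnj F) F) = 0}"

definition faithful_functional where
  "faithful_functional A Mr \<omega> \<longleftrightarrow> gns_ideal A Mr \<omega> = {(\<lambda>n x. 0)}"

text \<open>The class psi_G of G in the quotient C_0(M)[[lambda]] / J_omega.\<close>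
definition gns_vec where
  "gns_vec A Mr \<omega> G = {H \<in> compact_series A. series_diff H G \<in> gns_ideal A Mr \<omega>}"

definition gns_space where
  "gns_space A Mr \<omega> = gns_vec A Mr \<omega> ` compact_series A"

text \<open>pi_omega(F) psi_G = psi_(F*G), as a map on the quotient (undefined-free: empty outside).\<close>
definition gns_rep where
  "gns_rep A Mr \<omega> F = (\<lambda>\<psi>. if \<psi> \<in> gns_space A Mr \<omega>
      then gns_vec A Mr \<omega> (star Mr F (SOME G. G \<in> compact_series A \<and> \<psi> = gns_vec A Mr \<omega> G))
      else {})"

end

theory Submission
  imports Defs "HOL-Computational_Algebra.Polynomial"
begin

text \<open>
  The GNS ideal \<open>\<J>\<close> is a left ideal, by a formal Cauchy-Schwarz inequality.

  If \<open>\<J> = {0}\<close>, every class \<open>\<psi>\<^sub>G\<close> is the singleton \<open>{G}\<close>, so \<open>\<pi>(F) = \<pi>(F')\<close> means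
  \<open>F * G = F' * G\<close> for every compactly supported \<open>G\<close>. For a bump \<open>\<beta>\<close> at \<open>p\<close>, the
  \<open>\<lambda>\<^sup>n\<close>-coefficient of \<open>F * \<beta>\<close> at \<open>p\<close> is \<open>F\<^sub>n(p) \<beta>(p)\<close> plus terms in the \<open>F\<^sub>s\<close> with \<open>s < n\<close>,
  so \<open>F\<close> and \<open>F'\<close> agree coefficient by coefficient.

  Conversely, a nonzero element of \<open>\<J>\<close>, divided by a power of \<open>\<lambda>\<close>, gives \<open>F \<in> \<J>\<close> with
  \<open>F\<^sub>0(p) \<noteq> 0\<close>. Near \<open>p\<close> one solves \<open>e * F = \<theta>\<close> order by order for a cutoff \<open>\<theta>\<close> equal to \<open>1\<close>
  near \<open>p\<close>. By locality of the \<open>M\<^sub>r\<close>, every \<open>u\<close> supported where \<open>\<theta> = 1\<close> satisfies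
  \<open>u = u * \<theta> = (u * e) * F \<in> \<J>\<close>. Hence \<open>\<pi>(\<beta>) = \<pi>(0)\<close> for a bump \<open>\<beta>\<close> at \<open>p\<close>.
\<close>

section \<open>Iterated differentiability on open subsets of a Euclidean space\<close>

definition partial_deriv ::
  "('e::euclidean_space \<Rightarrow> 'b::real_normed_vector) \<Rightarrow> 'e \<Rightarrow> 'e \<Rightarrow> 'b" where
  "partial_deriv f b x = frechet_derivative f (at x) b"

fun ck_on :: "'e::euclidean_space set \<Rightarrow> nat \<Rightarrow> ('e \<Rightarrow> 'b::real_normed_vector) \<Rightarrow> bool"
  where
  "ck_on U 0 f = True"
| "ck_on U (Suc k) f \<longleftrightarrow>
     (\<forall>x\<in>U. f differentiable (at x)) \<and> (\<forall>b\<in>Basis. ck_on U k (partial_deriv f b))"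

lemma smooth_on_iff_ck_on: "smooth_on U f \<longleftrightarrow> (\<forall>k. ck_on U k f)"
proof
  assume "smooth_on U f"
  have "ck_on U k f" for k
    using \<open>smooth_on U f\<close>
  proof (induction k arbitrary: f)
    case (Suc k)
    then show ?case
      by (auto elim: smooth_on.cases simp: partial_deriv_def[abs_def])
  qed simp
  then show "\<forall>k. ck_on U k f" ..
next
  assume "\<forall>k. ck_on U k f"
  then show "smooth_on U f"
  proof (coinduction arbitrary: f rule: smooth_on.coinduct)
    case (smooth_on f)
    then have "ck_on U (Suc k) f" for k
      by blast
    then show ?case
      by (fastforce simp: partial_deriv_def[abs_def])
  qed
qed

lemma smooth_on_differentiable: "smooth_on U f \<Longrightarrow> x \<in> U \<Longrightarrow> f differentiable (at x)"
  by (auto elim: smooth_on.cases)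

lemma smooth_on_partial_deriv: "smooth_on U f \<Longrightarrow> b \<in> Basis \<Longrightarrow> smooth_on U (partial_deriv f b)"
  by (auto elim: smooth_on.cases simp: partial_deriv_def[abs_def])

lemma partial_deriv_eq: "(f has_derivative f') (at x) \<Longrightarrow> partial_deriv f b x = f' b"
  by (simp add: partial_deriv_def frechet_derivative_at[symmetric])

lemma has_derivative_partial_deriv:
  "f differentiable (at x) \<Longrightarrow> (f has_derivative (\<lambda>b. partial_deriv f b x)) (at x)"
  by (simp add: partial_deriv_def frechet_derivative_works)

lemma ck_on_Suc_imp: "ck_on U (Suc k) f \<Longrightarrow> ck_on U k f"
  by (induction k arbitrary: f) auto

lemma ck_on_subset: "W \<subseteq> U \<Longrightarrow> ck_on U k f \<Longrightarrow> ck_on W k f"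
  by (induction k arbitrary: f) auto

lemma ck_on_cong:
  assumes "open U" "ck_on U k f" "\<And>x. x \<in> U \<Longrightarrow> f x = g x"
  shows "ck_on U k g"
  using assms(2,3)
proof (induction k arbitrary: f g)
  case (Suc k)
  have f_diff: "f differentiable (at x)" if "x \<in> U" for x
    using Suc.prems(1) that by simp
  have "g differentiable (at x)" if "x \<in> U" for x
    using f_diff[OF that] assms(1) that Suc.prems(2)
    by (meson differentiable_def has_derivative_transform_within_open)
  moreover have "partial_deriv f b x = partial_deriv g b x" if "x \<in> U" for b x
    unfolding partial_deriv_def
    using frechet_derivative_transform_within_open[OF f_diff[OF that] assms(1) that] Suc.prems(2)
    by metis
  ultimately show ?case
    using Suc by auto
qed simp

lemma ck_on_const: "ck_on U k (\<lambda>x. c)"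
  by (induction k arbitrary: c) (simp_all add: partial_deriv_def[abs_def])

lemma ck_on_id: "ck_on U k (\<lambda>x. x)"
  by (cases k) (simp_all add: partial_deriv_def[abs_def] ck_on_const)

lemma ck_on_bounded_linear:
  assumes "open U" "bounded_linear L"
  shows "ck_on U k f \<Longrightarrow> ck_on U k (\<lambda>x. L (f x))"
proof (induction k arbitrary: f)
  case (Suc k)
  have D: "((\<lambda>x. L (f x)) has_derivative (\<lambda>b. L (partial_deriv f b x))) (at x)" if "x \<in> U" for x
    using Suc.prems that
    by (auto intro: bounded_linear.has_derivative[OF assms(2) has_derivative_partial_deriv])
  have "ck_on U k (partial_deriv (\<lambda>x. L (f x)) b)" if "b \<in> Basis" for b
  proof (rule ck_on_cong[OF assms(1)])
    show "ck_on U k (\<lambda>x. L (partial_deriv f b x))"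
      using Suc that by simp
  qed (simp add: partial_deriv_eq[OF D])
  then show ?case
    using D by (auto simp: differentiable_def)
qed simp

lemma ck_on_add:
  assumes "open U"
  shows "ck_on U k f \<Longrightarrow> ck_on U k g \<Longrightarrow> ck_on U k (\<lambda>x. f x + g x)"
proof (induction k arbitrary: f g)
  case (Suc k)
  have D: "((\<lambda>x. f x + g x) has_derivative (\<lambda>b. partial_deriv f b x + partial_deriv g b x)) (at x)"
    if "x \<in> U" for x
    using Suc.prems that
    by (auto intro: has_derivative_add[OF has_derivative_partial_deriv
          has_derivative_partial_deriv])
  have "ck_on U k (partial_deriv (\<lambda>x. f x + g x) b)" if "b \<in> Basis" for b
  proof (rule ck_on_cong[OF assms(1)])
    show "ck_on U k (\<lambda>x. partial_deriv f b x + partial_deriv g b x)"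
      using Suc that by simp
  qed (simp add: partial_deriv_eq[OF D])
  then show ?case
    using D by (auto simp: differentiable_def)
qed simp

lemma ck_on_sum:
  assumes "open U" "finite S" "\<And>i. i \<in> S \<Longrightarrow> ck_on U k (f i)"
  shows "ck_on U k (\<lambda>x. \<Sum>i\<in>S. f i x)"
  using assms(2,3)
  by (induction S rule: finite_induct) (simp_all add: ck_on_const ck_on_add[OF assms(1)])

lemma ck_on_bounded_bilinear:
  fixes prod :: "'a::real_normed_vector \<Rightarrow> 'b::real_normed_vector \<Rightarrow> 'c::real_normed_vector"
  assumes "open U" "bounded_bilinear prod"
  shows "ck_on U k f \<Longrightarrow> ck_on U k g \<Longrightarrow> ck_on U k (\<lambda>x. prod (f x) (g x))"
proof (induction k arbitrary: f g)
  case (Suc k)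
  have D: "((\<lambda>x. prod (f x) (g x)) has_derivative
      (\<lambda>b. prod (f x) (partial_deriv g b x) + prod (partial_deriv f b x) (g x))) (at x)"
    if "x \<in> U" for x
    using Suc.prems that
    by (auto intro: bounded_bilinear.FDERIV[OF assms(2) has_derivative_partial_deriv
          has_derivative_partial_deriv])
  have "ck_on U k (partial_deriv (\<lambda>x. prod (f x) (g x)) b)" if b: "b \<in> Basis" for b
  proof (rule ck_on_cong[OF assms(1)])
    have "ck_on U k f" "ck_on U k g"
      using Suc.prems by (simp_all add: ck_on_Suc_imp)
    then have "ck_on U k (\<lambda>x. prod (f x) (partial_deriv g b x))"
      and "ck_on U k (\<lambda>x. prod (partial_deriv f b x) (g x))"
      using Suc.prems b by (auto intro: Suc.IH)
    then show "ck_on U k (\<lambda>x. prod (f x) (partial_deriv g b x) + prod (partial_deriv f b x) (g x))"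
      by (rule ck_on_add[OF assms(1)])
  qed (simp add: partial_deriv_eq[OF D])
  then show ?case
    using D by (auto simp: differentiable_def)
qed simp

lemma ck_on_compose:
  fixes g :: "'f::euclidean_space \<Rightarrow> 'b::real_normed_vector" and T :: "'e::euclidean_space \<Rightarrow> 'f"
  assumes "open W" "T ` W \<subseteq> S"
  shows "smooth_on S g \<Longrightarrow> ck_on W k T \<Longrightarrow> ck_on W k (\<lambda>x. g (T x))"
proof (induction k arbitrary: g)
  case (Suc k)
  have TS: "T x \<in> S" if "x \<in> W" for x
    using assms(2) that by auto
  have g_deriv: "(g has_derivative (\<lambda>v. partial_deriv g v y)) (at y)" if "y \<in> S" for y
    using Suc.prems(1) that by (intro has_derivative_partial_deriv smooth_on_differentiable)
  have T_deriv: "(T has_derivative (\<lambda>b. partial_deriv T b x)) (at x)" if "x \<in> W" for x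
    using Suc.prems(2) that by (intro has_derivative_partial_deriv) auto
  have D: "((\<lambda>x. g (T x)) has_derivative (\<lambda>b. partial_deriv g (partial_deriv T b x) (T x))) (at x)"
    if "x \<in> W" for x
    using has_derivative_compose[OF T_deriv[OF that] g_deriv[OF TS[OF that]]] .
  have chain_rule: "partial_deriv g v (T x) = (\<Sum>i\<in>Basis. (v \<bullet> i) *\<^sub>R partial_deriv g i (T x))"
    if "x \<in> W" for v x
  proof -
    have lin: "linear (\<lambda>v. partial_deriv g v (T x))"
      using has_derivative_linear[OF g_deriv[OF TS[OF that]]] .
    have "partial_deriv g v (T x) = partial_deriv g (\<Sum>i\<in>Basis. (v \<bullet> i) *\<^sub>R i) (T x)"
      by (simp add: euclidean_representation)
    also have "\<dots> = (\<Sum>i\<in>Basis. (v \<bullet> i) *\<^sub>R partial_deriv g i (T x))"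
      by (simp add: linear_sum[OF lin] linear_scale[OF lin])
    finally show ?thesis .
  qed
  have "ck_on W k (partial_deriv (\<lambda>x. g (T x)) b)" if b: "b \<in> Basis" for b
  proof (rule ck_on_cong[OF assms(1)])
    show "ck_on W k (\<lambda>x. \<Sum>i\<in>Basis. (partial_deriv T b x \<bullet> i) *\<^sub>R partial_deriv g i (T x))"
    proof (rule ck_on_sum[OF assms(1) finite_Basis],
        rule ck_on_bounded_bilinear[OF assms(1) bounded_bilinear_scaleR])
      fix i :: 'f assume i: "i \<in> Basis"
      have "ck_on W k (partial_deriv T b)"
        using Suc.prems(2) b by simp
      then show "ck_on W k (\<lambda>x. partial_deriv T b x \<bullet> i)"
        by (rule ck_on_bounded_linear[OF assms(1) bounded_linear_inner_left])
      show "ck_on W k (\<lambda>x. partial_deriv g i (T x))"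
        using Suc.prems by (intro Suc.IH smooth_on_partial_deriv i) (simp_all add: ck_on_Suc_imp)
    qed
  next
    fix x assume x: "x \<in> W"
    show "(\<Sum>i\<in>Basis. (partial_deriv T b x \<bullet> i) *\<^sub>R partial_deriv g i (T x)) =
        partial_deriv (\<lambda>x. g (T x)) b x"
      using partial_deriv_eq[OF D[OF x], of b] chain_rule[OF x, of "partial_deriv T b x"] by simp
  qed
  then show ?case
    using D by (auto simp: differentiable_def)
qed simp

lemma ck_on_local:
  assumes "open S"
    and "\<And>z. z \<in> S \<Longrightarrow> \<exists>W g. open W \<and> z \<in> W \<and> smooth_on W g \<and> (\<forall>x\<in>W. f x = g x)"
  shows "ck_on S k f"
  using assms(2)
proof (induction k arbitrary: f)
  case (Suc k)
  have "f differentiable (at z) \<and> (\<forall>b\<in>Basis. \<exists>W g. open W \<and> z \<in> W \<and> smooth_on W g \<and>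
      (\<forall>x\<in>W. partial_deriv f b x = g x))" if z: "z \<in> S" for z
  proof -
    obtain W g where W: "open W" "z \<in> W" "smooth_on W g" "\<forall>x\<in>W. f x = g x"
      using Suc.prems[OF z] by blast
    have f_deriv: "(f has_derivative (\<lambda>b. partial_deriv g b x)) (at x)" if "x \<in> W" for x
    proof (rule has_derivative_transform_within_open[OF _ W(1) that])
      show "(g has_derivative (\<lambda>b. partial_deriv g b x)) (at x)"
        using W(3) that by (intro has_derivative_partial_deriv smooth_on_differentiable)
    qed (use W(4) in auto)
    have "partial_deriv f b x = partial_deriv g b x" if "x \<in> W" for b x
      using partial_deriv_eq[OF f_deriv[OF that]] .
    then have "\<forall>b\<in>Basis. open W \<and> z \<in> W \<and> smooth_on W (partial_deriv g b) \<and>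
        (\<forall>x\<in>W. partial_deriv f b x = partial_deriv g b x)"
      using W smooth_on_partial_deriv[OF W(3)] by blast
    then show ?thesis
      using f_deriv[OF W(2)] by (auto simp: differentiable_def)
  qed
  then show ?case
    using Suc.IH by simp
qed simp

lemma ck_on_inverse: "ck_on (- {0}) k (inverse :: complex \<Rightarrow> complex)"
proof (induction k)
  case (Suc k)
  have D: "(inverse has_derivative (\<lambda>h. - (inverse x * h * inverse x))) (at x)"
    if "x \<in> - {0}" for x :: complex
    using has_derivative_inverse'[of x UNIV] that by auto
  have "ck_on (- {0}) k (\<lambda>x::complex. inverse x * inverse x)"
    using ck_on_bounded_bilinear[OF open_Compl[OF closed_singleton] bounded_bilinear_mult Suc Suc] .
  then have "ck_on (- {0}) k (\<lambda>x::complex. - (b * (inverse x * inverse x)))" for b :: complex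
    by (rule ck_on_bounded_linear[OF open_Compl[OF closed_singleton]
          bounded_linear_minus[OF bounded_linear_mult_right]])
  then have "ck_on (- {0}) k (partial_deriv inverse b)" for b :: complex
    by (rule ck_on_cong[OF open_Compl[OF closed_singleton]]) (simp add: partial_deriv_eq[OF D])
  then show ?case
    using D by (auto simp: differentiable_def)
qed simp

lemma smooth_on_subset: "W \<subseteq> U \<Longrightarrow> smooth_on U f \<Longrightarrow> smooth_on W f"
  by (simp add: smooth_on_iff_ck_on ck_on_subset)

lemma smooth_on_cong: "open U \<Longrightarrow> smooth_on U f \<Longrightarrow> (\<And>x. x \<in> U \<Longrightarrow> f x = g x) \<Longrightarrow> smooth_on U g"
  unfolding smooth_on_iff_ck_on using ck_on_cong by blast

lemma smooth_on_const: "smooth_on U (\<lambda>x. c)"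
  by (simp add: smooth_on_iff_ck_on ck_on_const)

lemma smooth_on_id: "smooth_on U (\<lambda>x. x)"
  by (simp add: smooth_on_iff_ck_on ck_on_id)

lemma smooth_on_bounded_linear:
  "open U \<Longrightarrow> bounded_linear L \<Longrightarrow> smooth_on U f \<Longrightarrow> smooth_on U (\<lambda>x. L (f x))"
  by (simp add: smooth_on_iff_ck_on ck_on_bounded_linear)

lemma smooth_on_add: "open U \<Longrightarrow> smooth_on U f \<Longrightarrow> smooth_on U g \<Longrightarrow> smooth_on U (\<lambda>x. f x + g x)"
  by (simp add: smooth_on_iff_ck_on ck_on_add)

lemma smooth_on_bounded_bilinear:
  fixes prod :: "'a::real_normed_vector \<Rightarrow> 'b::real_normed_vector \<Rightarrow> 'c::real_normed_vector"
  shows "open U \<Longrightarrow> bounded_bilinear prod \<Longrightarrow> smooth_on U f \<Longrightarrow> smooth_on U g \<Longrightarrow>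
    smooth_on U (\<lambda>x. prod (f x) (g x))"
  by (simp add: smooth_on_iff_ck_on ck_on_bounded_bilinear)

lemma smooth_on_mult:
  "open U \<Longrightarrow> smooth_on U f \<Longrightarrow> smooth_on U g \<Longrightarrow> smooth_on U (\<lambda>x. f x * g x :: 'a::real_normed_algebra)"
  by (rule smooth_on_bounded_bilinear[OF _ bounded_bilinear_mult])

lemma smooth_on_minus: "open U \<Longrightarrow> smooth_on U f \<Longrightarrow> smooth_on U (\<lambda>x. - f x)"
  using smooth_on_bounded_linear[OF _ bounded_linear_minus[OF bounded_linear_ident]] by blast

lemma smooth_on_diff: "open U \<Longrightarrow> smooth_on U f \<Longrightarrow> smooth_on U g \<Longrightarrow> smooth_on U (\<lambda>x. f x - g x)"
  using smooth_on_add[of U f "\<lambda>x. - g x"] smooth_on_minus[of U g] by simp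

lemma smooth_on_compose:
  fixes g :: "'f::euclidean_space \<Rightarrow> 'b::real_normed_vector" and T :: "'e::euclidean_space \<Rightarrow> 'f"
  shows "open W \<Longrightarrow> T ` W \<subseteq> S \<Longrightarrow> smooth_on S g \<Longrightarrow> smooth_on W T \<Longrightarrow> smooth_on W (\<lambda>x. g (T x))"
  by (simp add: smooth_on_iff_ck_on ck_on_compose)

lemma smooth_on_local:
  "open S \<Longrightarrow> (\<And>z. z \<in> S \<Longrightarrow> \<exists>W g. open W \<and> z \<in> W \<and> smooth_on W g \<and> (\<forall>x\<in>W. f x = g x)) \<Longrightarrow>
    smooth_on S f"
  by (simp add: smooth_on_iff_ck_on ck_on_local)

lemma smooth_on_inverse: "smooth_on (- {0}) (inverse :: complex \<Rightarrow> complex)"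
  by (simp add: smooth_on_iff_ck_on ck_on_inverse)

section \<open>Smooth cutoff functions\<close>

text \<open>Every derivative of \<open>t \<mapsto> exp (-1/t)\<close> (extended by \<open>0\<close> for \<open>t \<le> 0\<close>) is of the form
  \<open>flat_fun p\<close>.\<close>

definition flat_fun :: "real poly \<Rightarrow> real \<Rightarrow> real" where
  "flat_fun p t = (if t > 0 then poly p (inverse t) * exp (- inverse t) else 0)"

definition flat_fun_deriv_poly :: "real poly \<Rightarrow> real poly" where
  "flat_fun_deriv_poly p = monom 1 2 * (p - pderiv p)"

lemma poly_times_exp_neg_tendsto_0: "((\<lambda>s::real. poly p s * exp (- s)) \<longlongrightarrow> 0) at_top"
proof -
  have "((\<lambda>s. \<Sum>i\<le>degree p. coeff p i * (s ^ i / exp s)) \<longlongrightarrow> (\<Sum>i\<le>degree p. coeff p i * 0)) at_top"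
    by (intro tendsto_sum tendsto_mult tendsto_const tendsto_power_div_exp_0)
  moreover have "(\<Sum>i\<le>degree p. coeff p i * (s ^ i / exp s)) = poly p s * exp (- s)" for s
    by (simp add: poly_altdef sum_distrib_right exp_minus divide_inverse mult.assoc)
  ultimately show ?thesis
    by simp
qed

lemma poly_inverse_times_exp_neg_inverse_tendsto_0:
  "((\<lambda>t. poly p (inverse t) * exp (- inverse t)) \<longlongrightarrow> 0) (at_right (0::real))"
  using filterlim_compose[OF poly_times_exp_neg_tendsto_0 filterlim_inverse_at_top_right] by simp

lemma flat_fun_has_derivative_pos:
  assumes "t > 0"
  shows "(flat_fun p has_real_derivative flat_fun (flat_fun_deriv_poly p) t) (at t)"
proof -
  have "((\<lambda>t. poly p (inverse t) * exp (- inverse t)) has_real_derivative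
      poly (pderiv p) (inverse t) * (- (inverse t * inverse t)) * exp (- inverse t)
      + poly p (inverse t) * (exp (- inverse t) * (inverse t * inverse t))) (at t)"
    using assms
    by (auto intro!: derivative_eq_intros DERIV_chain2[OF poly_DERIV] simp: power2_eq_square)
  also have "poly (pderiv p) (inverse t) * (- (inverse t * inverse t)) * exp (- inverse t)
      + poly p (inverse t) * (exp (- inverse t) * (inverse t * inverse t))
      = flat_fun (flat_fun_deriv_poly p) t"
    using assms
    by (simp add: flat_fun_def flat_fun_deriv_poly_def poly_monom algebra_simps power2_eq_square)
  finally show ?thesis
    using has_field_derivative_transform_within_open[of _ _ t "{0<..}" "flat_fun p"] assms
    by (auto simp: flat_fun_def)
qed

lemma flat_fun_has_derivative_neg:
  assumes "t < 0"
  shows "(flat_fun p has_real_derivative flat_fun (flat_fun_deriv_poly p) t) (at t)"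
proof -
  have "((\<lambda>t. 0) has_real_derivative flat_fun (flat_fun_deriv_poly p) t) (at t)"
    using assms by (simp add: flat_fun_def)
  then show ?thesis
    using has_field_derivative_transform_within_open
        [of "\<lambda>t. 0" "flat_fun (flat_fun_deriv_poly p) t" t "{..<0}" "flat_fun p"] assms
    by (auto simp: flat_fun_def)
qed

lemma flat_fun_has_derivative_0:
  "(flat_fun p has_real_derivative flat_fun (flat_fun_deriv_poly p) 0) (at 0)"
proof -
  have "((\<lambda>h. flat_fun p h / h) \<longlongrightarrow> 0) (at_left 0)"
    by (rule Lim_transform_eventually[OF tendsto_const])
      (simp add: eventually_at_filter flat_fun_def)
  moreover have "((\<lambda>h. flat_fun p h / h) \<longlongrightarrow> 0) (at_right 0)"
  proof (rule Lim_transform_eventually[OF poly_inverse_times_exp_neg_inverse_tendsto_0])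
    show "\<forall>\<^sub>F h in at_right 0. poly (pCons 0 p) (inverse h) * exp (- inverse h) = flat_fun p h / h"
      by (rule eventually_mono[OF eventually_at_right_less]) (simp add: flat_fun_def divide_inverse)
  qed
  ultimately have "((\<lambda>h. flat_fun p h / h) \<longlongrightarrow> 0) (at 0)"
    by (simp add: filterlim_at_split)
  then show ?thesis
    by (simp add: DERIV_def flat_fun_def)
qed

lemma flat_fun_has_derivative:
  "(flat_fun p has_real_derivative flat_fun (flat_fun_deriv_poly p) t) (at t)"
  using flat_fun_has_derivative_pos flat_fun_has_derivative_neg flat_fun_has_derivative_0
  by (metis linorder_neqE_linordered_idom)

lemma ck_on_flat_fun: "ck_on UNIV k (flat_fun p)"
proof (induction k arbitrary: p)
  case (Suc k)
  have D: "(flat_fun p has_derivative (\<lambda>v. flat_fun (flat_fun_deriv_poly p) t * v)) (at t)" for t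
    using flat_fun_has_derivative[of p t] by (simp add: has_field_derivative_def)
  have "partial_deriv (flat_fun p) 1 = flat_fun (flat_fun_deriv_poly p)"
    by (auto simp: partial_deriv_eq[OF D])
  then show ?case
    using Suc D by (auto simp: differentiable_def)
qed simp

definition smooth_step :: "real \<Rightarrow> real" where
  "smooth_step = flat_fun 1"

lemma smooth_on_smooth_step: "smooth_on UNIV smooth_step"
  by (simp add: smooth_on_iff_ck_on smooth_step_def ck_on_flat_fun)

lemma smooth_step_pos: "t > 0 \<Longrightarrow> smooth_step t > 0"
  by (simp add: smooth_step_def flat_fun_def)

lemma smooth_step_eq_0: "t \<le> 0 \<Longrightarrow> smooth_step t = 0"
  by (simp add: smooth_step_def flat_fun_def)

lemma smooth_step_nonneg: "smooth_step t \<ge> 0"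
  by (simp add: smooth_step_def flat_fun_def)

text \<open>The denominator never vanishes: its first summand is positive on \<open>ball c r2\<close>, its second
  one outside \<open>cball c r1\<close>.\<close>

definition cutoff :: "'e::euclidean_space \<Rightarrow> real \<Rightarrow> real \<Rightarrow> 'e \<Rightarrow> complex" where
  "cutoff c r1 r2 y =
     complex_of_real (smooth_step (r2\<^sup>2 - (y - c) \<bullet> (y - c))) * inverse (complex_of_real
       (smooth_step (r2\<^sup>2 - (y - c) \<bullet> (y - c)) + smooth_step ((y - c) \<bullet> (y - c) - r1\<^sup>2)))"

lemma inner_diff_self_eq_dist_sq: "(y - c) \<bullet> (y - c) = (dist y c)\<^sup>2"
  by (simp add: dist_norm power2_norm_eq_inner)

lemma cutoff_denominator_pos:
  assumes "0 < r1" "r1 < r2"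
  shows "smooth_step (r2\<^sup>2 - (y - c) \<bullet> (y - c)) + smooth_step ((y - c) \<bullet> (y - c) - r1\<^sup>2) > 0"
proof (cases "dist y c < r2")
  case True
  then have "(dist y c)\<^sup>2 < r2\<^sup>2"
    using assms by (simp add: power_strict_mono)
  then show ?thesis
    using smooth_step_pos[of "r2\<^sup>2 - (y - c) \<bullet> (y - c)"] smooth_step_nonneg
    by (simp add: inner_diff_self_eq_dist_sq add_pos_nonneg)
next
  case False
  then have "r1\<^sup>2 < (dist y c)\<^sup>2"
    using assms by (simp add: power_strict_mono)
  then show ?thesis
    using smooth_step_pos[of "(y - c) \<bullet> (y - c) - r1\<^sup>2"] smooth_step_nonneg
    by (simp add: inner_diff_self_eq_dist_sq add_nonneg_pos)
qed

lemma smooth_on_cutoff: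
  assumes "0 < r1" "r1 < r2"
  shows "smooth_on UNIV (cutoff (c::'e::euclidean_space) r1 r2)"
proof -
  have sq: "smooth_on UNIV (\<lambda>y::'e. (y - c) \<bullet> (y - c))"
    using smooth_on_diff[OF open_UNIV smooth_on_id smooth_on_const]
    by (rule smooth_on_bounded_bilinear[OF open_UNIV bounded_bilinear_inner]) fact
  have num: "smooth_on UNIV (\<lambda>y::'e. smooth_step (r2\<^sup>2 - (y - c) \<bullet> (y - c)))"
    by (rule smooth_on_compose[OF open_UNIV _ smooth_on_smooth_step
          smooth_on_diff[OF open_UNIV smooth_on_const sq]]) simp
  have "smooth_on UNIV (\<lambda>y::'e. smooth_step ((y - c) \<bullet> (y - c) - r1\<^sup>2))"
    by (rule smooth_on_compose[OF open_UNIV _ smooth_on_smooth_step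
          smooth_on_diff[OF open_UNIV sq smooth_on_const]]) simp
  then have den: "smooth_on UNIV (\<lambda>y::'e. complex_of_real
      (smooth_step (r2\<^sup>2 - (y - c) \<bullet> (y - c)) + smooth_step ((y - c) \<bullet> (y - c) - r1\<^sup>2)))"
    by (intro smooth_on_bounded_linear[OF open_UNIV bounded_linear_of_real]
        smooth_on_add[OF open_UNIV num])
  have "smooth_on UNIV (\<lambda>y::'e. inverse (complex_of_real
      (smooth_step (r2\<^sup>2 - (y - c) \<bullet> (y - c)) + smooth_step ((y - c) \<bullet> (y - c) - r1\<^sup>2))))"
  proof (rule smooth_on_compose[OF open_UNIV _ smooth_on_inverse den])
    show "range (\<lambda>y::'e. complex_of_real
        (smooth_step (r2\<^sup>2 - (y - c) \<bullet> (y - c)) + smooth_step ((y - c) \<bullet> (y - c) - r1\<^sup>2))) \<subseteq> - {0}"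
      using cutoff_denominator_pos[OF assms, of _ c]
      by (auto simp del: of_real_add) (metis less_irrefl)
  qed
  then show ?thesis
    unfolding cutoff_def
    by (rule smooth_on_mult[OF open_UNIV
          smooth_on_bounded_linear[OF open_UNIV bounded_linear_of_real num]])
qed

lemma cutoff_eq_1:
  assumes "0 < r1" "r1 < r2" "dist y c < r1"
  shows "cutoff c r1 r2 y = 1"
proof -
  have "(dist y c)\<^sup>2 < r1\<^sup>2" "r1\<^sup>2 < r2\<^sup>2"
    using assms by (simp_all add: power_strict_mono)
  then have "smooth_step ((y - c) \<bullet> (y - c) - r1\<^sup>2) = 0"
    and "smooth_step (r2\<^sup>2 - (y - c) \<bullet> (y - c)) > 0"
    by (auto simp: inner_diff_self_eq_dist_sq intro!: smooth_step_eq_0 smooth_step_pos)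
  then show ?thesis
    by (simp add: cutoff_def)
qed

lemma cutoff_eq_0:
  assumes "dist y c \<ge> r2" "r2 \<ge> 0"
  shows "cutoff c r1 r2 y = 0"
proof -
  have "r2\<^sup>2 \<le> (dist y c)\<^sup>2"
    using assms by (simp add: power_mono)
  then show ?thesis
    by (simp add: cutoff_def inner_diff_self_eq_dist_sq smooth_step_eq_0)
qed

section \<open>Smooth functions on a manifold\<close>

lemma notin_supp_eq_0: "x \<notin> supp f \<Longrightarrow> f x = 0"
  using closure_subset[of "{x. f x \<noteq> 0}"] unfolding supp_def by auto

lemma closed_supp: "closed (supp f)"
  by (simp add: supp_def)

lemma supp_subset_closed: "closed K \<Longrightarrow> (\<And>x. x \<notin> K \<Longrightarrow> f x = 0) \<Longrightarrow> supp f \<subseteq> K"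
  unfolding supp_def by (rule closure_minimal) auto

lemma supp_mono: "(\<And>x. f x \<noteq> 0 \<Longrightarrow> g x \<noteq> 0) \<Longrightarrow> supp f \<subseteq> supp g"
  unfolding supp_def by (rule closure_mono) blast

lemma compact_supp_subset: "compact K \<Longrightarrow> supp f \<subseteq> K \<Longrightarrow> compact (supp f)"
  unfolding supp_def by (metis closed_closure compact_Int_closed inf.absorb_iff2)

lemma supp_zero [simp]: "supp (\<lambda>x. 0) = {}"
  by (simp add: supp_def)

lemma supp_cnj [simp]: "supp (\<lambda>x. cnj (f x)) = supp f"
  by (simp add: supp_def)

lemma supp_sum:
  assumes "finite I"
  shows "supp (\<lambda>x. \<Sum>i\<in>I. f i x) \<subseteq> (\<Union>i\<in>I. supp (f i))"
proof (rule supp_subset_closed[where f="\<lambda>x. \<Sum>i\<in>I. f i x"])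
  show "closed (\<Union>i\<in>I. supp (f i))"
    using assms by (auto simp: supp_def)
  show "(\<Sum>i\<in>I. f i x) = 0" if "x \<notin> (\<Union>i\<in>I. supp (f i))" for x
    using that notin_supp_eq_0[of x] by (simp add: sum.neutral)
qed

lemma smooth_atlas_chart:
  assumes "smooth_atlas A" "(U, \<phi>) \<in> A"
  shows "open U" "open (\<phi> ` U)" "homeomorphism U (\<phi> ` U) \<phi> (inv_into U \<phi>)"
  using assms unfolding smooth_atlas_def by auto

lemma smooth_atlas_transition:
  "smooth_atlas A \<Longrightarrow> (U, \<phi>) \<in> A \<Longrightarrow> (V, \<psi>) \<in> A \<Longrightarrow> smooth_on (\<phi> ` (U \<inter> V)) (\<psi> \<circ> inv_into U \<phi>)"
  unfolding smooth_atlas_def by fast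

lemma smooth_atlas_covers:
  assumes "smooth_atlas A"
  obtains U \<phi> where "(U, \<phi>) \<in> A" "p \<in> U"
proof -
  have "p \<in> \<Union>(fst ` A)"
    using assms unfolding smooth_atlas_def by simp
  then show ?thesis
    using that by force
qed

lemma open_chart_image:
  assumes "smooth_atlas A" "(U, \<phi>) \<in> A" "open W" "W \<subseteq> U"
  shows "open (\<phi> ` W)"
proof -
  have "openin (top_of_set (\<phi> ` U)) (\<phi> ` W)"
    using assms by (intro homeomorphism_imp_open_map[OF smooth_atlas_chart(3)[OF assms(1,2)]])
      (auto simp: openin_open_eq smooth_atlas_chart(1)[OF assms(1,2)])
  then show ?thesis
    using openin_open_trans smooth_atlas_chart(2)[OF assms(1,2)] by blast
qed

lemma inv_into_chart_image:
  assumes "smooth_atlas A" "(U, \<phi>) \<in> A" "x \<in> U"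
  shows "inv_into U \<phi> (\<phi> x) = x"
  using smooth_atlas_chart(3)[OF assms(1,2)] assms(3) unfolding homeomorphism_def by auto

lemma smooth_fun_binop:
  fixes A :: "('m::topological_space set \<times> ('m \<Rightarrow> 'e::euclidean_space)) set"
  assumes "smooth_atlas A"
    and "\<And>(U::'e set) F G. open U \<Longrightarrow> smooth_on U F \<Longrightarrow> smooth_on U G \<Longrightarrow>
      smooth_on U (\<lambda>z. h (F z) (G z))"
    and "smooth_fun A f" "smooth_fun A g"
  shows "smooth_fun A (\<lambda>x. h (f x) (g x))"
  unfolding smooth_fun_def
proof clarify
  fix U \<phi> assume "(U, \<phi>) \<in> A"
  then have "smooth_on (\<phi> ` U) (\<lambda>z. h ((f \<circ> inv_into U \<phi>) z) ((g \<circ> inv_into U \<phi>) z))"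
    using assms unfolding smooth_fun_def by (blast intro: smooth_atlas_chart(2))
  then show "smooth_on (\<phi> ` U) ((\<lambda>x. h (f x) (g x)) \<circ> inv_into U \<phi>)"
    by (simp add: comp_def)
qed

lemma smooth_fun_const: "smooth_fun A (\<lambda>x. c)"
  unfolding smooth_fun_def by (auto simp: comp_def smooth_on_const)

lemma smooth_fun_add:
  "smooth_atlas A \<Longrightarrow> smooth_fun A f \<Longrightarrow> smooth_fun A g \<Longrightarrow> smooth_fun A (\<lambda>x. f x + g x)"
  by (rule smooth_fun_binop[where h="(+)"]) (auto intro: smooth_on_add)

lemma smooth_fun_diff:
  "smooth_atlas A \<Longrightarrow> smooth_fun A f \<Longrightarrow> smooth_fun A g \<Longrightarrow> smooth_fun A (\<lambda>x. f x - g x)"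
  by (rule smooth_fun_binop[where h="(-)"]) (auto intro: smooth_on_diff)

lemma smooth_fun_mult:
  "smooth_atlas A \<Longrightarrow> smooth_fun A f \<Longrightarrow> smooth_fun A g \<Longrightarrow> smooth_fun A (\<lambda>x. f x * g x)"
  by (rule smooth_fun_binop[where h="(*)"]) (auto intro: smooth_on_mult)

lemma smooth_fun_cnj: "smooth_atlas A \<Longrightarrow> smooth_fun A f \<Longrightarrow> smooth_fun A (\<lambda>x. cnj (f x))"
  using smooth_fun_binop[where h="\<lambda>a b. cnj a" and g=f]
    smooth_on_bounded_linear[OF _ bounded_linear_cnj] by blast

lemma smooth_fun_sum:
  assumes "smooth_atlas A" "finite S" "\<And>i. i \<in> S \<Longrightarrow> smooth_fun A (f i)"
  shows "smooth_fun A (\<lambda>x. \<Sum>i\<in>S. f i x)"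
  using assms(2,3)
  by (induction S rule: finite_induct) (simp_all add: smooth_fun_const smooth_fun_add[OF assms(1)])

lemma smooth_fun_local:
  assumes "smooth_atlas A"
    and "\<And>y. \<exists>N. open N \<and> y \<in> N \<and> (\<forall>(V, \<psi>)\<in>A. smooth_on (\<psi> ` (V \<inter> N)) (h \<circ> inv_into V \<psi>))"
  shows "smooth_fun A h"
  unfolding smooth_fun_def
proof clarify
  fix V \<psi> assume chart: "(V, \<psi>) \<in> A"
  show "smooth_on (\<psi> ` V) (h \<circ> inv_into V \<psi>)"
  proof (rule smooth_on_local[OF smooth_atlas_chart(2)[OF assms(1) chart]])
    fix z assume "z \<in> \<psi> ` V"
    then obtain y where y: "y \<in> V" "z = \<psi> y"
      by blast
    obtain N where N: "open N" "y \<in> N" "smooth_on (\<psi> ` (V \<inter> N)) (h \<circ> inv_into V \<psi>)"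
      using assms(2)[of y] chart by blast
    have "open (\<psi> ` (V \<inter> N))"
      using N(1) smooth_atlas_chart(1)[OF assms(1) chart]
      by (intro open_chart_image[OF assms(1) chart]) auto
    moreover have "z \<in> \<psi> ` (V \<inter> N)"
      using N(2) y by blast
    ultimately show "\<exists>W g. open W \<and> z \<in> W \<and> smooth_on W g \<and> (\<forall>x\<in>W. (h \<circ> inv_into V \<psi>) x = g x)"
      using N(3) by blast
  qed
qed

definition chart_pullback :: "'m set \<Rightarrow> ('m \<Rightarrow> 'e) \<Rightarrow> ('e \<Rightarrow> complex) \<Rightarrow> 'm \<Rightarrow> complex" where
  "chart_pullback U \<phi> g y = (if y \<in> U then g (\<phi> y) else 0)"

lemma compact_chart_preimage:
  assumes "smooth_atlas A" "(U, \<phi>) \<in> A" "compact C" "C \<subseteq> \<phi> ` U"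
  shows "compact (inv_into U \<phi> ` C)"
proof (rule compact_continuous_image[OF _ assms(3)])
  have "continuous_on (\<phi> ` U) (inv_into U \<phi>)"
    using smooth_atlas_chart(3)[OF assms(1,2)] by (simp add: homeomorphism_def)
  then show "continuous_on C (inv_into U \<phi>)"
    using assms(4) by (rule continuous_on_subset)
qed

lemma chart_pullback_eq_0:
  assumes "smooth_atlas A" "(U, \<phi>) \<in> A" "\<And>z. z \<notin> C \<Longrightarrow> g z = 0" "y \<notin> inv_into U \<phi> ` C"
  shows "chart_pullback U \<phi> g y = 0"
proof (cases "y \<in> U")
  case True
  then have "\<phi> y \<notin> C"
    using assms(4) inv_into_chart_image[OF assms(1,2) True] by (metis image_eqI)
  then show ?thesis
    using assms(3) by (simp add: chart_pullback_def)
qed (simp add: chart_pullback_def)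

lemma supp_chart_pullback:
  assumes "smooth_atlas A" "(U, \<phi>) \<in> A" "\<And>z. z \<notin> C \<Longrightarrow> g z = 0" "closed (inv_into U \<phi> ` C)"
  shows "supp (chart_pullback U \<phi> g) \<subseteq> inv_into U \<phi> ` C"
  unfolding supp_def
proof (rule closure_minimal[OF subsetI assms(4)])
  fix y assume "y \<in> {y. chart_pullback U \<phi> g y \<noteq> 0}"
  then show "y \<in> inv_into U \<phi> ` C"
    using chart_pullback_eq_0[where C=C and g=g and y=y, OF assms(1-3)] by auto
qed

lemma smooth_on_chart_pullback_in_chart:
  assumes atlas: "smooth_atlas A" and chart: "(U, \<phi>) \<in> A" and V: "(V, \<psi>) \<in> A"
    and S: "open S" and g: "smooth_on S g"
  shows "smooth_on (\<psi> ` (V \<inter> (U \<inter> \<phi> -` S))) (chart_pullback U \<phi> g \<circ> inv_into V \<psi>)"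
proof (rule smooth_on_cong)
  define N where "N = U \<inter> \<phi> -` S"
  have inv: "inv_into V \<psi> (\<psi> x) = x" if "x \<in> V" for x
    using inv_into_chart_image[OF atlas V that] .
  have "open N"
    unfolding N_def using smooth_atlas_chart[OF atlas chart] S
    by (intro continuous_open_preimage) (auto simp: homeomorphism_def)
  then show open_image: "open (\<psi> ` (V \<inter> (U \<inter> \<phi> -` S)))"
    using smooth_atlas_chart(1)[OF atlas V]
    by (intro open_chart_image[OF atlas V]) (auto simp: N_def)
  have "smooth_on (\<psi> ` (V \<inter> U)) (\<phi> \<circ> inv_into V \<psi>)"
    by (rule smooth_atlas_transition[OF atlas V chart])
  then have "smooth_on (\<psi> ` (V \<inter> (U \<inter> \<phi> -` S))) (\<phi> \<circ> inv_into V \<psi>)"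
    by (rule smooth_on_subset[rotated]) auto
  moreover have "(\<phi> \<circ> inv_into V \<psi>) ` \<psi> ` (V \<inter> (U \<inter> \<phi> -` S)) \<subseteq> S"
    using inv by auto
  ultimately show "smooth_on (\<psi> ` (V \<inter> (U \<inter> \<phi> -` S))) (\<lambda>w. g ((\<phi> \<circ> inv_into V \<psi>) w))"
    using smooth_on_compose[OF open_image _ g] by blast
  show "g ((\<phi> \<circ> inv_into V \<psi>) w) = (chart_pullback U \<phi> g \<circ> inv_into V \<psi>) w"
    if "w \<in> \<psi> ` (V \<inter> (U \<inter> \<phi> -` S))" for w
    using that inv by (auto simp: chart_pullback_def)
qed

lemma smooth_fun_chart_pullback:
  fixes A :: "('m::t2_space set \<times> ('m \<Rightarrow> 'e::euclidean_space)) set"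
  assumes atlas: "smooth_atlas A" and chart: "(U, \<phi>) \<in> A"
    and S: "open S" "cball c \<rho> \<subseteq> S" "S \<subseteq> \<phi> ` U"
    and g: "smooth_on S g" "\<And>z. z \<notin> cball c \<rho> \<Longrightarrow> g z = 0"
  shows "smooth_fun A (chart_pullback U \<phi> g)"
proof (rule smooth_fun_local[OF atlas])
  fix y
  show "\<exists>N. open N \<and> y \<in> N \<and>
      (\<forall>(V, \<psi>)\<in>A. smooth_on (\<psi> ` (V \<inter> N)) (chart_pullback U \<phi> g \<circ> inv_into V \<psi>))"
  proof (cases "y \<in> U \<and> \<phi> y \<in> S")
    case True
    moreover have "open (U \<inter> \<phi> -` S)"
      using smooth_atlas_chart[OF atlas chart] S(1)
      by (intro continuous_open_preimage) (auto simp: homeomorphism_def)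
    ultimately show ?thesis
      using smooth_on_chart_pullback_in_chart[OF atlas chart _ S(1) g(1)] by blast
  next
    case False
    define K where "K = inv_into U \<phi> ` cball c \<rho>"
    have "closed K"
      unfolding K_def using S
      by (intro compact_imp_closed compact_chart_preimage[OF atlas chart]) auto
    have "y \<notin> K"
    proof
      assume "y \<in> K"
      then obtain z where "z \<in> cball c \<rho>" "y = inv_into U \<phi> z"
        by (auto simp: K_def)
      then show False
        using False S(2,3) by (metis f_inv_into_f inv_into_into subset_iff)
    qed
    have "smooth_on (\<psi> ` (V \<inter> - K)) (chart_pullback U \<phi> g \<circ> inv_into V \<psi>)"
      if V: "(V, \<psi>) \<in> A" for V \<psi>
    proof (rule smooth_on_cong[OF _ smooth_on_const])
      show "open (\<psi> ` (V \<inter> - K))"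
        using \<open>closed K\<close> smooth_atlas_chart(1)[OF atlas V]
        by (intro open_chart_image[OF atlas V]) auto
      show "0 = (chart_pullback U \<phi> g \<circ> inv_into V \<psi>) w" if "w \<in> \<psi> ` (V \<inter> - K)" for w
        using that inv_into_chart_image[OF atlas V]
          chart_pullback_eq_0[where C="cball c \<rho>" and g=g, OF atlas chart g(2)]
        by (auto simp: K_def)
    qed
    then show ?thesis
      using \<open>closed K\<close> \<open>y \<notin> K\<close> by (intro exI[of _ "- K"]) auto
  qed
qed

lemma chart_pullback_of_cball_supported:
  fixes A :: "('m::t2_space set \<times> ('m \<Rightarrow> 'e::euclidean_space)) set"
  assumes atlas: "smooth_atlas A" and chart: "(U, \<phi>) \<in> A"
    and S: "open S" "cball c \<rho> \<subseteq> S" "S \<subseteq> \<phi> ` U"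
    and g: "smooth_on S g" "\<And>z. z \<notin> cball c \<rho> \<Longrightarrow> g z = 0"
  shows "smooth_fun A (chart_pullback U \<phi> g)"
    and "supp (chart_pullback U \<phi> g) \<subseteq> inv_into U \<phi> ` cball c \<rho>"
    and "compact (inv_into U \<phi> ` cball c \<rho>)"
proof -
  show compact: "compact (inv_into U \<phi> ` cball c \<rho>)"
    using S by (intro compact_chart_preimage[OF atlas chart]) auto
  show "smooth_fun A (chart_pullback U \<phi> g)"
    by (rule smooth_fun_chart_pullback[OF atlas chart S g])
  show "supp (chart_pullback U \<phi> g) \<subseteq> inv_into U \<phi> ` cball c \<rho>"
    using supp_chart_pullback[OF atlas chart, where C="cball c \<rho>" and g=g] g(2)
      compact_imp_closed[OF compact] by blast
qed

lemma chart_ball_nonvanishing: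
  assumes atlas: "smooth_atlas A" and f: "smooth_fun A f" "f p \<noteq> 0"
  obtains U \<phi> R where "(U, \<phi>) \<in> A" "p \<in> U" "R > 0" "ball (\<phi> p) R \<subseteq> \<phi> ` U"
    "\<And>z. z \<in> ball (\<phi> p) R \<Longrightarrow> f (inv_into U \<phi> z) \<noteq> 0"
proof -
  obtain U \<phi> where chart: "(U, \<phi>) \<in> A" "p \<in> U"
    using smooth_atlas_covers[OF atlas] .
  have center: "\<phi> p \<in> \<phi> ` U"
    using chart(2) by simp
  have "smooth_on (\<phi> ` U) (f \<circ> inv_into U \<phi>)"
    using f(1) chart(1) unfolding smooth_fun_def by blast
  then have "continuous (at (\<phi> p)) (f \<circ> inv_into U \<phi>)"
    by (intro differentiable_imp_continuous_within smooth_on_differentiable[OF _ center])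
  moreover have "(f \<circ> inv_into U \<phi>) (\<phi> p) \<noteq> 0"
    using f(2) inv_into_chart_image[OF atlas chart] by simp
  ultimately obtain e1 where e1: "e1 > 0" "\<And>z. dist (\<phi> p) z < e1 \<Longrightarrow> (f \<circ> inv_into U \<phi>) z \<noteq> 0"
    using continuous_at_avoid by blast
  obtain e2 where e2: "e2 > 0" "ball (\<phi> p) e2 \<subseteq> \<phi> ` U"
    using smooth_atlas_chart(2)[OF atlas chart(1)] center open_contains_ball by blast
  show thesis
    using e1 e2 by (intro that[OF chart, of "min e1 e2"]) (auto simp: subset_iff)
qed

lemma inv_into_image_subset: "C \<subseteq> \<phi> ` U \<Longrightarrow> y \<in> inv_into U \<phi> ` C \<Longrightarrow> y \<in> U \<and> \<phi> y \<in> C"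
  by (auto simp: inv_into_into f_inv_into_f)

lemma chart_pullback_cutoff:
  fixes A :: "('m::t2_space set \<times> ('m \<Rightarrow> 'e::euclidean_space)) set"
  assumes atlas: "smooth_atlas A" and chart: "(U, \<phi>) \<in> A" and ball: "ball c R \<subseteq> \<phi> ` U"
    and r: "0 < r1" "r1 < r2" "r2 < R"
  shows "smooth_fun A (chart_pullback U \<phi> (cutoff c r1 r2))"
    and "supp (chart_pullback U \<phi> (cutoff c r1 r2)) \<subseteq> inv_into U \<phi> ` cball c r2"
    and "compact (inv_into U \<phi> ` cball c r2)"
proof -
  have "cball c r2 \<subseteq> ball c R"
    using r by auto
  moreover have "smooth_on (ball c R) (cutoff c r1 r2)"
    by (rule smooth_on_subset[OF subset_UNIV smooth_on_cutoff[OF r(1,2)]])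
  moreover have "cutoff c r1 r2 z = 0" if "z \<notin> cball c r2" for z
    using that r by (intro cutoff_eq_0) (auto simp: dist_commute)
  ultimately show "smooth_fun A (chart_pullback U \<phi> (cutoff c r1 r2))"
    and "supp (chart_pullback U \<phi> (cutoff c r1 r2)) \<subseteq> inv_into U \<phi> ` cball c r2"
    and "compact (inv_into U \<phi> ` cball c r2)"
    using chart_pullback_of_cball_supported[OF atlas chart open_ball _ ball] by blast+
qed

lemma chart_pullback_local_inverse:
  fixes A :: "('m::t2_space set \<times> ('m \<Rightarrow> 'e::euclidean_space)) set"
  assumes atlas: "smooth_atlas A" and chart: "(U, \<phi>) \<in> A" and ball: "ball c R \<subseteq> \<phi> ` U"
    and f: "smooth_fun A f" "\<And>z. z \<in> ball c R \<Longrightarrow> f (inv_into U \<phi> z) \<noteq> 0"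
    and r: "0 < r1" "r1 < r2" "r2 < R"
  obtains g where "smooth_fun A g" "\<And>x. x \<in> U \<Longrightarrow> dist c (\<phi> x) < r1 \<Longrightarrow> g x * f x = 1"
proof
  define g where "g = chart_pullback U \<phi> (\<lambda>z. cutoff c r1 r2 z * inverse (f (inv_into U \<phi> z)))"
  have "smooth_on (\<phi> ` U) (f \<circ> inv_into U \<phi>)"
    using f(1) chart unfolding smooth_fun_def by blast
  then have "smooth_on (ball c R) (\<lambda>z. f (inv_into U \<phi> z))"
    using ball by (auto simp: comp_def intro: smooth_on_subset)
  then have "smooth_on (ball c R) (\<lambda>z. inverse (f (inv_into U \<phi> z)))"
    using f(2) by (intro smooth_on_compose[OF open_ball _ smooth_on_inverse]) auto
  moreover have "smooth_on (ball c R) (cutoff c r1 r2)"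
    by (rule smooth_on_subset[OF subset_UNIV smooth_on_cutoff[OF r(1,2)]])
  ultimately show "smooth_fun A g"
    unfolding g_def using r
    by (intro chart_pullback_of_cball_supported(1)[OF atlas chart open_ball _ ball, of c r2]
        smooth_on_mult[OF open_ball]) (auto intro: cutoff_eq_0 simp: dist_commute)
  show "g x * f x = 1" if "x \<in> U" "dist c (\<phi> x) < r1" for x
  proof -
    have "f x \<noteq> 0"
      using f(2)[of "\<phi> x"] that r inv_into_chart_image[OF atlas chart] by (simp add: dist_commute)
    moreover have "cutoff c r1 r2 (\<phi> x) = 1"
      using that r by (intro cutoff_eq_1) (auto simp: dist_commute)
    ultimately show ?thesis
      using that inv_into_chart_image[OF atlas chart] by (simp add: g_def chart_pullback_def)
  qed
qed

text \<open>The bump, the cutoff and the inverse are pulled back from cutoffs on concentric balls of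
  radii \<open>r\<close>, \<open>3r\<close> and \<open>5r\<close> in one chart, inside a ball of radius \<open>6r\<close> on which \<open>f\<close> does not
  vanish.\<close>

lemma local_inverse_cutoffs:
  fixes A :: "('m::t2_space set \<times> ('m \<Rightarrow> 'e::euclidean_space)) set"
  assumes atlas: "smooth_atlas A" and f: "smooth_fun A f" "f p \<noteq> 0"
  obtains \<beta> N \<theta> g where "smooth_fun A \<beta>" "\<beta> p \<noteq> 0" "compact (supp \<beta>)" "supp \<beta> \<subseteq> N"
    "open N" "smooth_fun A \<theta>" "\<And>x. x \<in> N \<Longrightarrow> \<theta> x = 1"
    "smooth_fun A g" "\<And>x. x \<in> supp \<theta> \<Longrightarrow> g x * f x = 1"
proof -
  obtain U \<phi> R where chart: "(U, \<phi>) \<in> A" "p \<in> U" and R: "R > 0" "ball (\<phi> p) R \<subseteq> \<phi> ` U"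
    and f_nz: "\<And>z. z \<in> ball (\<phi> p) R \<Longrightarrow> f (inv_into U \<phi> z) \<noteq> 0"
    using chart_ball_nonvanishing[OF atlas f] by blast
  define c r where "c = \<phi> p" and "r = R / 6"
  note ball = R(2)[folded c_def]
  have r: "r > 0" "5 * r < R"
    using R(1) by (simp_all add: r_def)
  have in_chart: "y \<in> U \<and> dist c (\<phi> y) \<le> \<rho>" if "y \<in> inv_into U \<phi> ` cball c \<rho>" "\<rho> \<le> 5 * r" for y \<rho>
  proof -
    have "cball c \<rho> \<subseteq> \<phi> ` U"
      using ball r that(2) by (auto simp: subset_iff)
    then show ?thesis
      using inv_into_image_subset[OF _ that(1)] by simp
  qed
  obtain g where g: "smooth_fun A g" "\<And>x. x \<in> U \<Longrightarrow> dist c (\<phi> x) < 4 * r \<Longrightarrow> g x * f x = 1"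
    using chart_pullback_local_inverse[OF atlas chart(1) ball f(1) f_nz[folded c_def],
        of "4 * r" "5 * r"] r
    by auto
  define \<beta> where "\<beta> = chart_pullback U \<phi> (cutoff c (r / 2) r)"
  define \<theta> where "\<theta> = chart_pullback U \<phi> (cutoff c (2 * r) (3 * r))"
  define N where "N = U \<inter> \<phi> -` ball c (2 * r)"
  have "smooth_fun A \<beta>" "supp \<beta> \<subseteq> inv_into U \<phi> ` cball c r" "compact (inv_into U \<phi> ` cball c r)"
    using chart_pullback_cutoff[OF atlas chart(1) ball, of "r / 2" r] r by (simp_all add: \<beta>_def)
  moreover have "\<beta> p = 1"
    using chart(2) r by (simp add: \<beta>_def chart_pullback_def c_def cutoff_eq_1)
  moreover have "inv_into U \<phi> ` cball c r \<subseteq> N"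
  proof
    fix y assume "y \<in> inv_into U \<phi> ` cball c r"
    then show "y \<in> N"
      using in_chart[of y r] r by (simp add: N_def dist_commute)
  qed
  moreover have "open N"
    unfolding N_def using smooth_atlas_chart[OF atlas chart(1)]
    by (intro continuous_open_preimage) (auto simp: homeomorphism_def)
  moreover have "smooth_fun A \<theta>" "supp \<theta> \<subseteq> inv_into U \<phi> ` cball c (3 * r)"
    using chart_pullback_cutoff[OF atlas chart(1) ball, of "2 * r" "3 * r"] r
    by (simp_all add: \<theta>_def)
  moreover have "\<theta> x = 1" if "x \<in> N" for x
    using that r by (auto simp: \<theta>_def N_def chart_pullback_def dist_commute intro!: cutoff_eq_1)
  moreover have "g x * f x = 1" if "x \<in> inv_into U \<phi> ` cball c (3 * r)" for x
    using in_chart[OF that] r g(2)[of x] by simp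
  ultimately show thesis
    using g(1) by (intro that[of \<beta> N \<theta> g]) (auto intro: compact_supp_subset)
qed

lemma smooth_bump_exists:
  fixes A :: "('m::t2_space set \<times> ('m \<Rightarrow> 'e::euclidean_space)) set"
  assumes "smooth_atlas A"
  obtains \<beta> where "smooth_fun A \<beta>" "compact (supp \<beta>)" "\<beta> p \<noteq> 0"
proof -
  have "smooth_fun A (\<lambda>x. 1)" "(\<lambda>x. 1 :: complex) p \<noteq> 0"
    by (simp_all add: smooth_fun_const)
  then show thesis
    using local_inverse_cutoffs[OF assms] that by metis
qed

section \<open>Nonnegative formal power series\<close>

text \<open>A formal Cauchy-Schwarz argument: if \<open>\<alpha>\<^sub>m\<close>, \<open>\<beta>\<^sub>m\<close> are the lowest coefficients not both
  zero, the choice \<open>N = m + 1\<close> makes \<open>c \<alpha>\<^sub>m + cnj c \<beta>\<^sub>m\<close> the lowest coefficient of the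
  nonnegative series below, so it must be positive whenever it is nonzero; this fails for one of
  \<open>c = \<plusminus>1\<close> or for one of \<open>c = \<plusminus>\<i>\<close>.\<close>

lemma fps_nonneg_perturbation_lowest_coeff:
  fixes \<alpha> \<beta> \<gamma> :: "complex fps"
  assumes nonneg: "fps_nonneg (fps_const c * (fps_X ^ Suc m * \<alpha>)
      + fps_const (cnj c) * (fps_X ^ Suc m * \<beta>)
      + fps_const (c * cnj c) * (fps_X ^ (2 * Suc m) * \<gamma>))"
    and below: "\<And>i. i < m \<Longrightarrow> fps_nth \<alpha> i = 0 \<and> fps_nth \<beta> i = 0"
    and nonzero: "c * fps_nth \<alpha> m + cnj c * fps_nth \<beta> m \<noteq> 0"
  shows "Re (c * fps_nth \<alpha> m + cnj c * fps_nth \<beta> m) > 0"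
proof -
  define N where "N = Suc m"
  define D where "D = fps_const c * (fps_X ^ N * \<alpha>) + fps_const (cnj c) * (fps_X ^ N * \<beta>)
      + fps_const (c * cnj c) * (fps_X ^ (2 * N) * \<gamma>)"
  have coeff: "fps_nth D j =
      (if j < N then 0 else c * fps_nth \<alpha> (j - N) + cnj c * fps_nth \<beta> (j - N))
      + (if j < 2 * N then 0 else c * cnj c * fps_nth \<gamma> (j - 2 * N))" for j
    unfolding D_def by (simp add: fps_X_power_mult_nth)
  have D_lowest: "fps_nth D (N + m) = c * fps_nth \<alpha> m + cnj c * fps_nth \<beta> m"
    unfolding coeff by (simp add: N_def)
  have D_below: "fps_nth D i = 0" if "i < N + m" for i
  proof -
    have "i < 2 * N" "i < N \<or> i - N < m"
      using that by (auto simp: N_def)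
    then show ?thesis
      unfolding coeff using below by auto
  qed
  have "subdegree D = N + m"
    by (rule subdegreeI) (use D_lowest nonzero D_below in auto)
  moreover have "D \<noteq> 0"
    using D_lowest nonzero by auto
  moreover have "fps_nonneg D"
    using nonneg unfolding D_def N_def .
  ultimately show ?thesis
    unfolding fps_nonneg_def D_lowest[symmetric] by auto
qed

lemma fps_nonneg_perturbation_imp_zero:
  fixes \<alpha> \<beta> \<gamma> :: "complex fps"
  assumes "\<And>c N. fps_nonneg (fps_const c * (fps_X ^ N * \<alpha>) + fps_const (cnj c) * (fps_X ^ N * \<beta>)
      + fps_const (c * cnj c) * (fps_X ^ (2 * N) * \<gamma>))"
  shows "\<alpha> = 0 \<and> \<beta> = 0"
proof (rule ccontr)
  assume "\<not> (\<alpha> = 0 \<and> \<beta> = 0)"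
  then have ex: "\<exists>i. fps_nth \<alpha> i \<noteq> 0 \<or> fps_nth \<beta> i \<noteq> 0"
    by (auto simp: fps_eq_iff)
  define m where "m = (LEAST i. fps_nth \<alpha> i \<noteq> 0 \<or> fps_nth \<beta> i \<noteq> 0)"
  define a b where "a = fps_nth \<alpha> m" and "b = fps_nth \<beta> m"
  have "a \<noteq> 0 \<or> b \<noteq> 0"
    unfolding a_def b_def m_def by (rule LeastI_ex[OF ex])
  moreover have below: "fps_nth \<alpha> i = 0 \<and> fps_nth \<beta> i = 0" if "i < m" for i
    using not_less_Least[OF that[unfolded m_def]] by auto
  have pos: "Re (c * a + cnj c * b) > 0" if "c * a + cnj c * b \<noteq> 0" for c
    using fps_nonneg_perturbation_lowest_coeff[OF assms[of c "Suc m"] below] that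
    unfolding a_def b_def by blast
  ultimately show False
  proof (cases "a + b = 0")
    case False
    have "Re (1 * a + cnj 1 * b) > 0"
      using pos[of 1] False by simp
    moreover have "Re ((- 1) * a + cnj (- 1) * b) > 0"
      using pos[of "- 1"] False by (simp add: add_eq_0_iff)
    ultimately show False
      by simp
  next
    case True
    then have "b = - a" "a \<noteq> 0"
      using \<open>a \<noteq> 0 \<or> b \<noteq> 0\<close> by (auto simp: add_eq_0_iff)
    then have "Re (\<i> * a + cnj \<i> * b) > 0" "Re ((- \<i>) * a + cnj (- \<i>) * b) > 0"
      using pos[of \<i>] pos[of "- \<i>"] by simp_all
    then show False
      by simp
  qed
qed


section \<open>The star product and the GNS ideal\<close>

definition series_cmult :: "complex \<Rightarrow> 'm fseries \<Rightarrow> 'm fseries" where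
  "series_cmult c F = (\<lambda>n x. c * F n x)"

definition series_shift :: "nat \<Rightarrow> 'm fseries \<Rightarrow> 'm fseries" where
  "series_shift k F = (\<lambda>n. if k \<le> n then F (n - k) else (\<lambda>x. 0))"

definition series_of_fun :: "('m \<Rightarrow> complex) \<Rightarrow> 'm fseries" where
  "series_of_fun f = (\<lambda>n. if n = 0 then f else (\<lambda>x. 0))"

lemma sum_atMost_reflect: "(\<Sum>s\<le>(m::nat). f s) = (\<Sum>s\<le>m. f (m - s))"
  using sum.nat_diff_reindex[of "\<lambda>s. f s" "Suc m"] by (simp add: lessThan_Suc_atMost)

lemma sum_atMost_delta_mult:
  "(\<Sum>k\<le>(n::nat). (if k = N then (c::complex) else 0) * f k) = (if N \<le> n then c * f N else 0)"
proof -
  have "(\<Sum>k\<le>n. (if k = N then c else 0) * f k) = (\<Sum>k\<le>n. if k = N then c * f k else 0)"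
    by (rule sum.cong) auto
  then show ?thesis
    by (simp add: sum.delta)
qed

lemma series_scale_X_power: "series_scale (fps_X ^ k) F = series_shift k F"
  by (simp add: series_scale_def series_shift_def fun_eq_iff sum_atMost_delta_mult)

lemma series_scale_const: "series_scale (fps_const c) F = series_cmult c F"
  by (simp add: series_scale_def series_cmult_def fun_eq_iff sum_atMost_delta_mult)

lemma series_shift_0 [simp]: "series_shift 0 F = F"
  by (simp add: series_shift_def)

lemma series_scale_1: "series_scale 1 F = F"
  using series_scale_X_power[of 0 F] by simp

lemma series_add_zero [simp]: "series_add F (\<lambda>n x. 0) = F"
  by (simp add: series_add_def)

lemma series_cnj_cnj [simp]: "series_cnj (series_cnj F) = F"
  by (simp add: series_cnj_def)

lemma series_cnj_shift: "series_cnj (series_shift k F) = series_shift k (series_cnj F)"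
  by (simp add: series_cnj_def series_shift_def fun_eq_iff)

lemma series_cnj_add: "series_cnj (series_add F G) = series_add (series_cnj F) (series_cnj G)"
  by (simp add: series_cnj_def series_add_def)

lemma series_cnj_cmult: "series_cnj (series_cmult c F) = series_cmult (cnj c) (series_cnj F)"
  by (simp add: series_cnj_def series_cmult_def)

lemma series_cmult_cmult: "series_cmult a (series_cmult b F) = series_cmult (a * b) F"
  by (simp add: series_cmult_def mult.assoc)

lemma compact_series_imp_smooth_series: "F \<in> compact_series A \<Longrightarrow> F \<in> smooth_series A"
  by (simp add: compact_series_def smooth_series_def)

text \<open>The coefficients of a left inverse of \<open>G\<close> on \<open>supp \<theta>\<close>, i.e. of a solution \<open>e\<close> of
  \<open>e * G = \<theta>\<close>: the \<open>\<lambda>\<^sup>n\<close>-coefficient of \<open>e * G\<close> is \<open>e\<^sub>n G\<^sub>0\<close> plus terms involving only \<open>e\<^sub>s\<close> with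
  \<open>s < n\<close>, and \<open>g\<close> inverts \<open>G\<^sub>0\<close> on \<open>supp \<theta>\<close>.\<close>

fun star_inverse_coeff ::
  "(nat \<Rightarrow> ('m \<Rightarrow> complex) \<Rightarrow> ('m \<Rightarrow> complex) \<Rightarrow> ('m \<Rightarrow> complex)) \<Rightarrow> ('m \<Rightarrow> complex) \<Rightarrow>
    ('m \<Rightarrow> complex) \<Rightarrow> 'm fseries \<Rightarrow> nat \<Rightarrow> 'm \<Rightarrow> complex" where
  "star_inverse_coeff Mr g \<theta> G n = (\<lambda>x. g x * ((if n = 0 then \<theta> x else 0) -
     (\<Sum>r\<le>n. \<Sum>s\<le>n - r. if r = 0 \<and> s = n then 0
        else Mr r (star_inverse_coeff Mr g \<theta> G s) (G (n - r - s)) x)))"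

declare star_inverse_coeff.simps [simp del]

locale gns_setting =
  fixes A :: "('m::t2_space set \<times> ('m \<Rightarrow> 'e::euclidean_space)) set"
    and pb :: "('m \<Rightarrow> complex) \<Rightarrow> ('m \<Rightarrow> complex) \<Rightarrow> ('m \<Rightarrow> complex)"
    and Mr :: "nat \<Rightarrow> ('m \<Rightarrow> complex) \<Rightarrow> ('m \<Rightarrow> complex) \<Rightarrow> ('m \<Rightarrow> complex)"
    and \<omega> :: "'m fseries \<Rightarrow> complex fps"
  assumes atlas: "smooth_atlas A"
    and star_product: "local_star_product A pb Mr"
    and positive: "positive_functional A Mr \<omega>"
begin

abbreviation \<J> :: "'m fseries set" where "\<J> \<equiv> gns_ideal A Mr \<omega>"

lemma smooth_fun_Mr: "smooth_fun A f \<Longrightarrow> smooth_fun A g \<Longrightarrow> smooth_fun A (Mr r f g)"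
  using star_product[unfolded local_star_product_def, THEN conjunct1, rule_format, of f g f r]
  by blast

lemma
  assumes "smooth_fun A f" "smooth_fun A g" "smooth_fun A h"
  shows Mr_linear_left: "Mr r (\<lambda>x. a * f x + g x) h = (\<lambda>x. a * Mr r f h x + Mr r g h x)"
    and Mr_linear_right: "Mr r h (\<lambda>x. a * f x + g x) = (\<lambda>x. a * Mr r h f x + Mr r h g x)"
  using star_product[unfolded local_star_product_def, THEN conjunct1, rule_format, OF assms, of r a]
  by auto

lemma supp_Mr: "smooth_fun A f \<Longrightarrow> smooth_fun A g \<Longrightarrow> supp (Mr r f g) \<subseteq> supp f \<inter> supp g"
  using star_product unfolding local_star_product_def by blast

lemma Mr_0: "smooth_fun A f \<Longrightarrow> smooth_fun A g \<Longrightarrow> Mr 0 f g = (\<lambda>x. f x * g x)"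
  using star_product unfolding local_star_product_def by blast

lemma Mr_const_right: "r \<ge> 1 \<Longrightarrow> smooth_fun A f \<Longrightarrow> Mr r f (\<lambda>x. c) = (\<lambda>x. 0)"
  using star_product unfolding local_star_product_def by blast

lemma Mr_cnj:
  "smooth_fun A f \<Longrightarrow> smooth_fun A g \<Longrightarrow> (\<lambda>x. cnj (Mr r f g x)) = Mr r (\<lambda>x. cnj (g x)) (\<lambda>x. cnj (f x))"
  using star_product unfolding local_star_product_def by blast

lemma star_assoc:
  "F \<in> smooth_series A \<Longrightarrow> G \<in> smooth_series A \<Longrightarrow> H \<in> smooth_series A \<Longrightarrow>
    star Mr (star Mr F G) H = star Mr F (star Mr G H)"
  using star_product unfolding local_star_product_def by blast

lemma Mr_zero_left: "smooth_fun A h \<Longrightarrow> Mr r (\<lambda>x. 0) h = (\<lambda>x. 0)"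
  using Mr_linear_left[OF smooth_fun_const smooth_fun_const, of h r 1 0 0] by (simp add: fun_eq_iff)

lemma Mr_zero_right: "smooth_fun A h \<Longrightarrow> Mr r h (\<lambda>x. 0) = (\<lambda>x. 0)"
  using Mr_linear_right[OF smooth_fun_const smooth_fun_const, of h r 1 0 0]
  by (simp add: fun_eq_iff)

lemma Mr_cmult_left: "smooth_fun A f \<Longrightarrow> smooth_fun A h \<Longrightarrow> Mr r (\<lambda>x. a * f x) h = (\<lambda>x. a * Mr r f h x)"
  using Mr_linear_left[OF _ smooth_fun_const, of f h r a 0] Mr_zero_left by simp

lemma Mr_cmult_right:
  "smooth_fun A f \<Longrightarrow> smooth_fun A h \<Longrightarrow> Mr r h (\<lambda>x. a * f x) = (\<lambda>x. a * Mr r h f x)"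
  using Mr_linear_right[OF _ smooth_fun_const, of f h r a 0] Mr_zero_right by simp

lemma Mr_add_left:
  "smooth_fun A f \<Longrightarrow> smooth_fun A g \<Longrightarrow> smooth_fun A h \<Longrightarrow>
    Mr r (\<lambda>x. f x + g x) h = (\<lambda>x. Mr r f h x + Mr r g h x)"
  using Mr_linear_left[of f g h r 1] by simp

lemma Mr_add_right:
  "smooth_fun A f \<Longrightarrow> smooth_fun A g \<Longrightarrow> smooth_fun A h \<Longrightarrow>
    Mr r h (\<lambda>x. f x + g x) = (\<lambda>x. Mr r h f x + Mr r h g x)"
  using Mr_linear_right[of f g h r 1] by simp

lemma star_nth: "star Mr F G n = (\<lambda>x. \<Sum>r\<le>n. \<Sum>s\<le>n - r. Mr r (F s) (G (n - r - s)) x)"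
  by (simp add: star_def)

lemma smooth_series_star:
  "F \<in> smooth_series A \<Longrightarrow> G \<in> smooth_series A \<Longrightarrow> star Mr F G \<in> smooth_series A"
  unfolding smooth_series_def star_nth
  by (intro CollectI allI smooth_fun_sum[OF atlas] finite_atMost smooth_fun_Mr) auto

lemma supp_star_subset:
  assumes "F \<in> smooth_series A" "G \<in> smooth_series A"
  shows "supp (star Mr F G n) \<subseteq> (\<Union>s\<le>n. supp (F s)) \<inter> (\<Union>t\<le>n. supp (G t))"
proof -
  have "supp (star Mr F G n) \<subseteq> (\<Union>r\<le>n. supp (\<lambda>x. \<Sum>s\<le>n - r. Mr r (F s) (G (n - r - s)) x))"
    unfolding star_nth by (rule supp_sum) simp
  also have "\<dots> \<subseteq> (\<Union>r\<le>n. \<Union>s\<le>n - r. supp (Mr r (F s) (G (n - r - s))))"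
    by (intro UN_mono order_refl supp_sum) simp
  also have "\<dots> \<subseteq> (\<Union>s\<le>n. supp (F s)) \<inter> (\<Union>t\<le>n. supp (G t))"
  proof (intro UN_least)
    fix r s assume "r \<in> {..n}" "s \<in> {..n - r}"
    then show "supp (Mr r (F s) (G (n - r - s))) \<subseteq> (\<Union>s\<le>n. supp (F s)) \<inter> (\<Union>t\<le>n. supp (G t))"
      using supp_Mr[of "F s" "G (n - r - s)" r] assms by (force simp: smooth_series_def)
  qed
  finally show ?thesis .
qed

lemma compact_series_star:
  assumes "F \<in> smooth_series A" "G \<in> compact_series A"
  shows "star Mr F G \<in> compact_series A"
proof -
  have G: "G \<in> smooth_series A"
    using assms(2) by (rule compact_series_imp_smooth_series)
  have "compact (supp (star Mr F G n))" for n
  proof (rule compact_supp_subset)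
    show "compact (\<Union>t\<le>n. supp (G t))"
      using assms(2) by (intro compact_UN) (auto simp: compact_series_def)
    show "supp (star Mr F G n) \<subseteq> (\<Union>t\<le>n. supp (G t))"
      using supp_star_subset[OF assms(1) G] by blast
  qed
  then show ?thesis
    using smooth_series_star[OF assms(1) G] by (simp add: smooth_series_def compact_series_def)
qed

lemma smooth_series_cnj: "F \<in> smooth_series A \<Longrightarrow> series_cnj F \<in> smooth_series A"
  by (simp add: smooth_series_def series_cnj_def smooth_fun_cnj[OF atlas])

lemma compact_series_cnj: "F \<in> compact_series A \<Longrightarrow> series_cnj F \<in> compact_series A"
  by (simp add: compact_series_def series_cnj_def smooth_fun_cnj[OF atlas])

lemma smooth_series_shift: "F \<in> smooth_series A \<Longrightarrow> series_shift k F \<in> smooth_series A"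
  by (simp add: smooth_series_def series_shift_def smooth_fun_const)

lemma compact_series_shift: "F \<in> compact_series A \<Longrightarrow> series_shift k F \<in> compact_series A"
  by (simp add: compact_series_def series_shift_def smooth_fun_const)

lemma smooth_series_cmult: "F \<in> smooth_series A \<Longrightarrow> series_cmult c F \<in> smooth_series A"
  by (simp add: smooth_series_def series_cmult_def smooth_fun_mult[OF atlas smooth_fun_const])

lemma compact_series_cmult:
  assumes "F \<in> compact_series A"
  shows "series_cmult c F \<in> compact_series A"
proof -
  have "compact (supp (\<lambda>x. c * F n x))" for n
    using assms by (auto simp: compact_series_def intro: compact_supp_subset[OF _ supp_mono])
  then show ?thesis
    using assms
    by (simp add: compact_series_def series_cmult_def smooth_fun_mult[OF atlas smooth_fun_const])
qed

lemma smooth_series_add: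
  "F \<in> smooth_series A \<Longrightarrow> G \<in> smooth_series A \<Longrightarrow> series_add F G \<in> smooth_series A"
  by (simp add: smooth_series_def series_add_def smooth_fun_add[OF atlas])

lemma compact_series_add:
  assumes "F \<in> compact_series A" "G \<in> compact_series A"
  shows "series_add F G \<in> compact_series A"
proof -
  have "supp (\<lambda>x. F n x + G n x) \<subseteq> supp (F n) \<union> supp (G n)" for n
    using supp_sum[of "{True, False}" "\<lambda>i x. if i then F n x else G n x"] by (simp add: add.commute)
  then have "compact (supp (\<lambda>x. F n x + G n x))" for n
  proof (rule compact_supp_subset[rotated])
    show "compact (supp (F n) \<union> supp (G n))"
      using assms by (simp add: compact_series_def compact_Un)
  qed
  then show ?thesis
    using assms by (auto simp: compact_series_def series_add_def smooth_fun_add[OF atlas])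
qed

lemma zero_compact_series: "(\<lambda>n x. 0) \<in> compact_series A"
  by (simp add: compact_series_def smooth_fun_const)

lemmas series_closed =
  compact_series_imp_smooth_series smooth_series_cnj compact_series_cnj smooth_series_shift
  compact_series_shift smooth_series_cmult compact_series_cmult smooth_series_add compact_series_add
  smooth_series_star compact_series_star

lemma series_cnj_star:
  assumes F: "F \<in> smooth_series A" and G: "G \<in> smooth_series A"
  shows "series_cnj (star Mr F G) = star Mr (series_cnj G) (series_cnj F)"
proof (intro ext)
  fix n x
  have cnj_Mr: "cnj (Mr r (F s) (G t) x) = Mr r (series_cnj G t) (series_cnj F s) x" for r s t
    using fun_cong[OF Mr_cnj[of "F s" "G t" r], of x] F G
    by (simp add: smooth_series_def series_cnj_def)
  have "series_cnj (star Mr F G) n x =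
      (\<Sum>r\<le>n. \<Sum>s\<le>n - r. Mr r (series_cnj G (n - r - s)) (series_cnj F s) x)"
    by (simp add: series_cnj_def star_nth cnj_Mr)
  also have "\<dots> = (\<Sum>r\<le>n. \<Sum>s\<le>n - r. Mr r (series_cnj G s) (series_cnj F (n - r - s)) x)"
  proof (rule sum.cong[OF refl])
    fix r
    show "(\<Sum>s\<le>n - r. Mr r (series_cnj G (n - r - s)) (series_cnj F s) x) =
        (\<Sum>s\<le>n - r. Mr r (series_cnj G s) (series_cnj F (n - r - s)) x)"
    proof (subst sum_atMost_reflect, rule sum.cong[OF refl])
      fix s assume "s \<in> {..n - r}"
      then have "n - r - (n - r - s) = s"
        by auto
      then show "Mr r (series_cnj G (n - r - (n - r - s))) (series_cnj F (n - r - s)) x =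
          Mr r (series_cnj G s) (series_cnj F (n - r - s)) x"
        by simp
    qed
  qed
  finally show "series_cnj (star Mr F G) n x = star Mr (series_cnj G) (series_cnj F) n x"
    by (simp add: star_nth)
qed

lemma star_add_left:
  assumes "F \<in> smooth_series A" "G \<in> smooth_series A" "H \<in> smooth_series A"
  shows "star Mr (series_add F G) H = series_add (star Mr F H) (star Mr G H)"
  using assms
  by (simp add: star_nth series_add_def smooth_series_def Mr_add_left sum.distrib fun_eq_iff)

lemma star_add_right:
  assumes "F \<in> smooth_series A" "G \<in> smooth_series A" "H \<in> smooth_series A"
  shows "star Mr H (series_add F G) = series_add (star Mr H F) (star Mr H G)"
  using assms
  by (simp add: star_nth series_add_def smooth_series_def Mr_add_right sum.distrib fun_eq_iff)

lemma star_cmult_left: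
  assumes "F \<in> smooth_series A" "H \<in> smooth_series A"
  shows "star Mr (series_cmult c F) H = series_cmult c (star Mr F H)"
  using assms
  by (simp add: star_nth series_cmult_def smooth_series_def Mr_cmult_left sum_distrib_left
      fun_eq_iff)

lemma star_cmult_right:
  assumes "F \<in> smooth_series A" "H \<in> smooth_series A"
  shows "star Mr H (series_cmult c F) = series_cmult c (star Mr H F)"
  using assms
  by (simp add: star_nth series_cmult_def smooth_series_def Mr_cmult_right sum_distrib_left
      fun_eq_iff)

lemma star_shift_right:
  assumes F: "F \<in> smooth_series A" and G: "G \<in> smooth_series A"
  shows "star Mr F (series_shift k G) = series_shift k (star Mr F G)"
proof (intro ext)
  fix n x
  have Mr_shift:
    "Mr r (F s) (series_shift k G t) x = (if k \<le> t then Mr r (F s) (G (t - k)) x else 0)" for r s t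
    using F G Mr_zero_right[of "F s" r] by (simp add: series_shift_def smooth_series_def)
  show "star Mr F (series_shift k G) n x = series_shift k (star Mr F G) n x"
  proof (cases "k \<le> n")
    case False
    then show ?thesis
      unfolding star_nth Mr_shift by (auto simp: series_shift_def intro!: sum.neutral)
  next
    case True
    define m where "m = n - k"
    have n: "n = m + k"
      using True by (simp add: m_def)
    have "star Mr F (series_shift k G) n x =
        (\<Sum>r\<le>n. \<Sum>s\<le>n - r. if r + s \<le> m then Mr r (F s) (G (m - r - s)) x else 0)"
      unfolding star_nth Mr_shift by (intro sum.cong refl) (auto simp: n)
    also have "\<dots> = (\<Sum>r\<le>m. \<Sum>s\<le>n - r. if r + s \<le> m then Mr r (F s) (G (m - r - s)) x else 0)"
      by (rule sum.mono_neutral_right) (auto simp: n)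
    also have "\<dots> = (\<Sum>r\<le>m. \<Sum>s\<le>m - r. Mr r (F s) (G (m - r - s)) x)"
      by (intro sum.cong refl sum.mono_neutral_cong_right) (auto simp: n)
    also have "\<dots> = series_shift k (star Mr F G) n x"
      by (simp add: series_shift_def star_nth True m_def)
    finally show ?thesis .
  qed
qed

lemma star_shift_left:
  assumes F: "F \<in> smooth_series A" and G: "G \<in> smooth_series A"
  shows "star Mr (series_shift k F) G = series_shift k (star Mr F G)"
proof -
  have "star Mr (series_shift k F) G = series_cnj (series_cnj (star Mr (series_shift k F) G))"
    by simp
  also have "\<dots> = series_cnj (star Mr (series_cnj G) (series_shift k (series_cnj F)))"
    using F G by (simp add: series_cnj_star series_closed series_cnj_shift)
  also have "\<dots> = series_cnj (series_shift k (star Mr (series_cnj G) (series_cnj F)))"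
    using F G by (simp add: star_shift_right series_closed)
  also have "\<dots> = series_shift k (star Mr F G)"
    using F G by (simp add: series_cnj_shift flip: series_cnj_star)
  finally show ?thesis .
qed

lemma omega_add_scale:
  "F \<in> compact_series A \<Longrightarrow> G \<in> compact_series A \<Longrightarrow>
    \<omega> (series_add (series_scale a F) G) = a * \<omega> F + \<omega> G"
  using positive unfolding positive_functional_def by blast

lemma omega_star_cnj_self_nonneg: "F \<in> compact_series A \<Longrightarrow> fps_nonneg (\<omega> (star Mr (series_cnj F) F))"
  using positive unfolding positive_functional_def by blast

lemma omega_zero: "\<omega> (\<lambda>n x. 0) = 0"
  using omega_add_scale[OF zero_compact_series zero_compact_series, of 1]
  by (simp add: series_scale_1)

lemma omega_add: "F \<in> compact_series A \<Longrightarrow> G \<in> compact_series A \<Longrightarrow> \<omega> (series_add F G) = \<omega> F + \<omega> G"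
  using omega_add_scale[of F G 1] by (simp add: series_scale_1)

lemma omega_scale: "F \<in> compact_series A \<Longrightarrow> \<omega> (series_scale a F) = a * \<omega> F"
  using omega_add_scale[OF _ zero_compact_series, of F a] by (simp add: omega_zero)

lemma omega_cmult: "F \<in> compact_series A \<Longrightarrow> \<omega> (series_cmult c F) = fps_const c * \<omega> F"
  using omega_scale[of F "fps_const c"] by (simp add: series_scale_const)

lemma omega_shift: "F \<in> compact_series A \<Longrightarrow> \<omega> (series_shift k F) = fps_X ^ k * \<omega> F"
  using omega_scale[of F "fps_X ^ k"] by (simp add: series_scale_X_power)

lemma omega_norm_add_cmult_shift:
  fixes c :: complex and N :: nat
  assumes P: "P \<in> compact_series A" and Q: "Q \<in> compact_series A"
  defines "R \<equiv> series_add P (series_cmult c (series_shift N Q))"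
  shows "\<omega> (star Mr (series_cnj R) R) =
    \<omega> (star Mr (series_cnj P) P) + fps_const c * (fps_X ^ N * \<omega> (star Mr (series_cnj P) Q))
    + fps_const (cnj c) * (fps_X ^ N * \<omega> (star Mr (series_cnj Q) P))
    + fps_const (c * cnj c) * (fps_X ^ (2 * N) * \<omega> (star Mr (series_cnj Q) Q))"
proof -
  define P' Q' where "P' = series_cnj P" and "Q' = series_cnj Q"
  have P': "P' \<in> compact_series A" and Q': "Q' \<in> compact_series A"
    using P Q by (simp_all add: P'_def Q'_def series_closed)
  have "star Mr (series_cnj R) R =
      star Mr (series_add P' (series_cmult (cnj c) (series_shift N Q'))) R"
    by (simp add: R_def series_cnj_add series_cnj_cmult series_cnj_shift P'_def Q'_def)
  also have "\<dots> =
      series_add (series_add (star Mr P' P) (series_cmult c (series_shift N (star Mr P' Q))))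
      (series_add (series_cmult (cnj c) (series_shift N (star Mr Q' P)))
        (series_cmult (c * cnj c) (series_shift N (series_shift N (star Mr Q' Q)))))"
    using P Q P' Q' unfolding R_def
    by (simp add: star_add_left star_add_right star_cmult_left star_cmult_right star_shift_left
        star_shift_right series_cmult_cmult series_closed)
      (simp add: fun_eq_iff series_add_def series_cmult_def series_shift_def algebra_simps)
  finally have star_R: "star Mr (series_cnj R) R = \<dots>" .
  have X_power_twice: "fps_X ^ N * (fps_X ^ N * w) = fps_X ^ (2 * N) * w" for w :: "complex fps"
    by (metis mult_2 power_add mult.assoc)
  show ?thesis
    unfolding star_R P'_def[symmetric] Q'_def[symmetric] using P Q P' Q'
    by (simp add: omega_add omega_cmult omega_shift series_closed X_power_twice add.assoc)
qed

lemma omega_cauchy_schwarz: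
  assumes P: "P \<in> compact_series A" "\<omega> (star Mr (series_cnj P) P) = 0" and Q: "Q \<in> compact_series A"
  shows "\<omega> (star Mr (series_cnj P) Q) = 0 \<and> \<omega> (star Mr (series_cnj Q) P) = 0"
proof (rule fps_nonneg_perturbation_imp_zero)
  fix c N
  have "series_add P (series_cmult c (series_shift N Q)) \<in> compact_series A"
    using P Q by (simp add: series_closed)
  from omega_star_cnj_self_nonneg[OF this]
  show "fps_nonneg (fps_const c * (fps_X ^ N * \<omega> (star Mr (series_cnj P) Q))
      + fps_const (cnj c) * (fps_X ^ N * \<omega> (star Mr (series_cnj Q) P))
      + fps_const (c * cnj c) * (fps_X ^ (2 * N) * \<omega> (star Mr (series_cnj Q) Q)))"
    unfolding omega_norm_add_cmult_shift[OF P(1) Q] P(2) by simp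
qed

lemma gns_ideal_iff: "F \<in> \<J> \<longleftrightarrow> F \<in> compact_series A \<and> \<omega> (star Mr (series_cnj F) F) = 0"
  by (simp add: gns_ideal_def)

lemma star_left_mem_gns_ideal:
  assumes K: "K \<in> smooth_series A" and G: "G \<in> \<J>"
  shows "star Mr K G \<in> \<J>"
proof -
  have G_cs: "G \<in> compact_series A" and G_0: "\<omega> (star Mr (series_cnj G) G) = 0"
    using G by (auto simp: gns_ideal_iff)
  have "star Mr (series_cnj (star Mr K G)) (star Mr K G) =
      star Mr (series_cnj G) (star Mr (series_cnj K) (star Mr K G))"
    using K G_cs by (simp add: series_cnj_star star_assoc series_closed)
  moreover have "\<omega> (star Mr (series_cnj G) (star Mr (series_cnj K) (star Mr K G))) = 0"
    using omega_cauchy_schwarz[OF G_cs G_0] K G_cs by (simp add: series_closed)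
  ultimately show ?thesis
    using K G_cs by (simp add: gns_ideal_iff series_closed)
qed

lemma gns_ideal_add_cmult:
  assumes P: "P \<in> \<J>" and Q: "Q \<in> \<J>"
  shows "series_add P (series_cmult c Q) \<in> \<J>"
proof -
  have P_cs: "P \<in> compact_series A" and P_0: "\<omega> (star Mr (series_cnj P) P) = 0"
    using P by (auto simp: gns_ideal_iff)
  have Q_cs: "Q \<in> compact_series A" and Q_0: "\<omega> (star Mr (series_cnj Q) Q) = 0"
    using Q by (auto simp: gns_ideal_iff)
  show ?thesis
    using omega_norm_add_cmult_shift[OF P_cs Q_cs, of c 0] omega_cauchy_schwarz[OF P_cs P_0 Q_cs]
      P_0 Q_0 P_cs Q_cs by (simp add: gns_ideal_iff series_closed)
qed

lemma zero_mem_gns_ideal: "(\<lambda>n x. 0) \<in> \<J>"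
proof -
  have "star Mr (series_cnj (\<lambda>n x. 0)) (\<lambda>n x. 0) = (\<lambda>n x. 0)"
    by (simp add: star_nth series_cnj_def Mr_zero_left smooth_fun_const fun_eq_iff)
  then show ?thesis
    by (simp add: gns_ideal_iff zero_compact_series omega_zero)
qed

lemma gns_vec_of_mem_gns_ideal:
  assumes X: "X \<in> \<J>"
  shows "gns_vec A Mr \<omega> X = \<J>"
proof
  show "gns_vec A Mr \<omega> X \<subseteq> \<J>"
  proof
    fix H assume "H \<in> gns_vec A Mr \<omega> X"
    then have "series_add (series_diff H X) (series_cmult 1 X) \<in> \<J>"
      by (intro gns_ideal_add_cmult[OF _ X]) (simp add: gns_vec_def)
    then show "H \<in> \<J>"
      by (simp add: series_add_def series_diff_def series_cmult_def)
  qed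
  show "\<J> \<subseteq> gns_vec A Mr \<omega> X"
  proof
    fix H assume H: "H \<in> \<J>"
    have "series_add H (series_cmult (- 1) X) \<in> \<J>"
      by (rule gns_ideal_add_cmult[OF H X])
    then show "H \<in> gns_vec A Mr \<omega> X"
      using H
      by (simp add: gns_vec_def gns_ideal_iff series_add_def series_diff_def series_cmult_def)
  qed
qed

lemma smooth_series_of_fun: "smooth_fun A f \<Longrightarrow> series_of_fun f \<in> smooth_series A"
  by (simp add: smooth_series_def series_of_fun_def smooth_fun_const)

lemma compact_series_of_fun:
  "smooth_fun A f \<Longrightarrow> compact (supp f) \<Longrightarrow> series_of_fun f \<in> compact_series A"
  by (simp add: compact_series_def series_of_fun_def smooth_fun_const)

lemma star_series_of_fun_nth:
  assumes F: "F \<in> smooth_series A" and f: "smooth_fun A f"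
  shows "star Mr F (series_of_fun f) n x = F n x * f x + (\<Sum>r\<in>{1..n}. Mr r (F (n - r)) f x)"
proof -
  have "star Mr F (series_of_fun f) n x =
      (\<Sum>r\<le>n. \<Sum>s\<le>n - r. if s = n - r then Mr r (F s) f x else 0)"
    unfolding star_nth
    using F Mr_zero_right by (intro sum.cong refl) (auto simp: series_of_fun_def smooth_series_def)
  also have "\<dots> = (\<Sum>r\<in>insert 0 {1..n}. Mr r (F (n - r)) f x)"
    by (simp add: sum.delta atLeast0AtMost[symmetric] atLeastAtMost_insertL)
  finally show ?thesis
    using F f by (simp add: Mr_0 smooth_series_def)
qed

section \<open>Faithfulness of the GNS representation\<close>

lemma gns_rep_apply:
  assumes "\<psi> \<in> gns_space A Mr \<omega>"
  obtains G where "G \<in> compact_series A" "\<psi> = gns_vec A Mr \<omega> G"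
    "\<forall>F. gns_rep A Mr \<omega> F \<psi> = gns_vec A Mr \<omega> (star Mr F G)"
proof -
  define G where "G = (SOME G. G \<in> compact_series A \<and> \<psi> = gns_vec A Mr \<omega> G)"
  have "\<exists>G. G \<in> compact_series A \<and> \<psi> = gns_vec A Mr \<omega> G"
    using assms by (auto simp: gns_space_def)
  then have "G \<in> compact_series A \<and> \<psi> = gns_vec A Mr \<omega> G"
    unfolding G_def by (rule someI_ex)
  moreover have "gns_rep A Mr \<omega> F \<psi> = gns_vec A Mr \<omega> (star Mr F G)" for F
    using assms unfolding gns_rep_def G_def by simp
  ultimately show thesis
    using that by blast
qed

lemma inj_gns_rep_if_faithful:
  assumes faithful: "faithful_functional A Mr \<omega>"
  shows "inj_on (gns_rep A Mr \<omega>) (smooth_series A)"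
proof (rule inj_onI)
  fix F F' assume F: "F \<in> smooth_series A" and F': "F' \<in> smooth_series A"
    and eq: "gns_rep A Mr \<omega> F = gns_rep A Mr \<omega> F'"
  have vec: "gns_vec A Mr \<omega> G = {G}" if "G \<in> compact_series A" for G
    using that faithful
    by (auto simp: gns_vec_def faithful_functional_def series_diff_def fun_eq_iff)
  have star_eq: "star Mr F G = star Mr F' G" if G: "G \<in> compact_series A" for G
  proof -
    have "gns_vec A Mr \<omega> G \<in> gns_space A Mr \<omega>"
      using G by (simp add: gns_space_def)
    then obtain G' where "G' \<in> compact_series A" "gns_vec A Mr \<omega> G = gns_vec A Mr \<omega> G'"
      "gns_vec A Mr \<omega> (star Mr F G') = gns_vec A Mr \<omega> (star Mr F' G')"
      using eq by (metis gns_rep_apply)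
    then show ?thesis
      using G F F' vec compact_series_star by (metis singleton_inject)
  qed
  have "F n p = F' n p" for n p
  proof (induction n arbitrary: p rule: less_induct)
    case (less n)
    obtain \<beta> where \<beta>: "smooth_fun A \<beta>" "compact (supp \<beta>)" "\<beta> p \<noteq> 0"
      using smooth_bump_exists[OF atlas] .
    have "star Mr F (series_of_fun \<beta>) n p = star Mr F' (series_of_fun \<beta>) n p"
      using star_eq[OF compact_series_of_fun[OF \<beta>(1,2)]] by simp
    moreover have "(\<Sum>r\<in>{1..n}. Mr r (F (n - r)) \<beta> p) = (\<Sum>r\<in>{1..n}. Mr r (F' (n - r)) \<beta> p)"
    proof (rule sum.cong[OF refl])
      fix r assume "r \<in> {1..n}"
      then have "F (n - r) = F' (n - r)"
        using less by (simp add: fun_eq_iff)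
      then show "Mr r (F (n - r)) \<beta> p = Mr r (F' (n - r)) \<beta> p"
        by simp
    qed
    ultimately have "F n p * \<beta> p = F' n p * \<beta> p"
      using F F' \<beta>(1) by (simp add: star_series_of_fun_nth)
    then show ?case
      using \<beta>(3) by simp
  qed
  then show "F = F'"
    by (simp add: fun_eq_iff)
qed

lemma star_nth_split_top:
  "star Mr E G n x = Mr 0 (E n) (G 0) x +
     (\<Sum>r\<le>n. \<Sum>s\<le>n - r. if r = 0 \<and> s = n then 0 else Mr r (E s) (G (n - r - s)) x)"
proof -
  have "star Mr E G n x =
      (\<Sum>r\<le>n. \<Sum>s\<le>n - r. (if r = 0 \<and> s = n then Mr r (E s) (G (n - r - s)) x else 0)
      + (if r = 0 \<and> s = n then 0 else Mr r (E s) (G (n - r - s)) x))"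
    unfolding star_nth by (intro sum.cong refl) simp
  also have "\<dots> = (\<Sum>r\<le>n. \<Sum>s\<le>n - r. if r = 0 \<and> s = n then Mr r (E s) (G (n - r - s)) x else 0)
      + (\<Sum>r\<le>n. \<Sum>s\<le>n - r. if r = 0 \<and> s = n then 0 else Mr r (E s) (G (n - r - s)) x)"
    by (simp add: sum.distrib)
  also have "(\<Sum>r\<le>n. \<Sum>s\<le>n - r. if r = 0 \<and> s = n then Mr r (E s) (G (n - r - s)) x else 0)
      = (\<Sum>r\<le>n. if r = 0 then Mr 0 (E n) (G 0) x else 0)"
  proof (rule sum.cong[OF refl])
    fix r
    show "(\<Sum>s\<le>n - r. if r = 0 \<and> s = n then Mr r (E s) (G (n - r - s)) x else 0)
        = (if r = 0 then Mr 0 (E n) (G 0) x else 0)"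
      by (cases "r = 0") simp_all
  qed
  finally show ?thesis
    by (simp add: sum.delta)
qed

lemma star_inverse_coeff_smooth:
  assumes g: "smooth_fun A g" and \<theta>: "smooth_fun A \<theta>" and G: "G \<in> smooth_series A"
  shows "smooth_fun A (star_inverse_coeff Mr g \<theta> G n) \<and>
    supp (star_inverse_coeff Mr g \<theta> G n) \<subseteq> supp \<theta>"
proof (induction n rule: less_induct)
  case (less n)
  define e where "e = star_inverse_coeff Mr g \<theta> G"
  define rest where "rest x = (\<Sum>r\<le>n. \<Sum>s\<le>n - r.
      if r = 0 \<and> s = n then 0 else Mr r (e s) (G (n - r - s)) x)" for x
  have e_n: "e n = (\<lambda>x. g x * ((if n = 0 then \<theta> x else 0) - rest x))"
    unfolding e_def rest_def by (rule star_inverse_coeff.simps)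
  have G_smooth: "smooth_fun A (G t)" for t
    using G by (simp add: smooth_series_def)
  have lower: "s < n" if "r \<le> n" "s \<le> n - r" "\<not> (r = 0 \<and> s = n)" for r s
    using that by auto
  have "smooth_fun A (\<lambda>x. if r = 0 \<and> s = n then 0 else Mr r (e s) (G (n - r - s)) x)"
    if "r \<le> n" "s \<le> n - r" for r s
  proof (cases "r = 0 \<and> s = n")
    case False
    then have "smooth_fun A (e s)"
      using less lower[OF that] by (simp add: e_def)
    then show ?thesis
      using G_smooth by (simp add: if_not_P[OF False] smooth_fun_Mr)
  qed (simp add: smooth_fun_const)
  then have "smooth_fun A rest"
    unfolding rest_def[abs_def] by (intro smooth_fun_sum[OF atlas] finite_atMost) auto
  moreover have "smooth_fun A (\<lambda>x. if n = 0 then \<theta> x else 0)"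
    using \<theta> by (cases "n = 0") (simp_all add: smooth_fun_const)
  ultimately have e_smooth: "smooth_fun A (e n)"
    unfolding e_n by (intro smooth_fun_mult[OF atlas g] smooth_fun_diff[OF atlas])
  have rest_0: "rest x = 0" if "x \<notin> supp \<theta>" for x
    unfolding rest_def
  proof (intro sum.neutral ballI)
    fix r s assume rs: "r \<in> {..n}" "s \<in> {..n - r}"
    show "(if r = 0 \<and> s = n then 0 else Mr r (e s) (G (n - r - s)) x) = 0"
    proof (cases "r = 0 \<and> s = n")
      case False
      then have "smooth_fun A (e s)" "supp (e s) \<subseteq> supp \<theta>"
        using less lower rs by (auto simp: e_def)
      then have "x \<notin> supp (Mr r (e s) (G (n - r - s)))"
        using supp_Mr[of "e s" "G (n - r - s)" r] G_smooth that by blast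
      then show ?thesis
        using False by (simp add: notin_supp_eq_0)
    qed simp
  qed
  have "supp (e n) \<subseteq> supp \<theta>"
  proof (rule supp_subset_closed[OF closed_supp])
    fix x assume "x \<notin> supp \<theta>"
    then show "e n x = 0"
      using rest_0 notin_supp_eq_0[of x \<theta>] by (simp add: e_n)
  qed
  then show ?case
    using e_smooth by (simp add: e_def)
qed

lemma star_left_inverse_exists:
  assumes g: "smooth_fun A g" and \<theta>: "smooth_fun A \<theta>" and G: "G \<in> smooth_series A"
    and inverse: "\<And>x. x \<in> supp \<theta> \<Longrightarrow> g x * G 0 x = 1"
  obtains e where "e \<in> smooth_series A" "star Mr e G = series_of_fun \<theta>"
proof
  define e where "e = star_inverse_coeff Mr g \<theta> G"
  note e_props = star_inverse_coeff_smooth[OF g \<theta> G, folded e_def]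
  show e: "e \<in> smooth_series A"
    using e_props by (simp add: smooth_series_def)
  show "star Mr e G = series_of_fun \<theta>"
  proof (intro ext)
    fix n x
    define rest where
      "rest = (\<Sum>r\<le>n. \<Sum>s\<le>n - r. if r = 0 \<and> s = n then 0 else Mr r (e s) (G (n - r - s)) x)"
    have e_n: "e n x = g x * ((if n = 0 then \<theta> x else 0) - rest)"
      unfolding e_def rest_def by (subst star_inverse_coeff.simps) simp
    have "star Mr e G n x = e n x * G 0 x + rest"
      using e G by (simp add: star_nth_split_top Mr_0 smooth_series_def rest_def)
    also have "\<dots> = series_of_fun \<theta> n x"
    proof (cases "x \<in> supp \<theta>")
      case True
      then show ?thesis
        using inverse[OF True] by (simp add: e_n series_of_fun_def algebra_simps)
    next
      case False
      have "rest = 0"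
        unfolding rest_def
      proof (intro sum.neutral ballI)
        fix r s
        have "supp (Mr r (e s) (G (n - r - s))) \<subseteq> supp \<theta>"
          using supp_Mr[of "e s" "G (n - r - s)" r] e_props G by (fastforce simp: smooth_series_def)
        then show "(if r = 0 \<and> s = n then 0 else Mr r (e s) (G (n - r - s)) x) = 0"
          using False notin_supp_eq_0 by auto
      qed
      moreover have "\<theta> x = 0"
        using notin_supp_eq_0[OF False] .
      ultimately show ?thesis
        by (simp add: series_of_fun_def e_n)
    qed
    finally show "star Mr e G n x = series_of_fun \<theta> n x" .
  qed
qed

lemma star_series_of_fun_eq_self:
  assumes \<theta>: "smooth_fun A \<theta>" "open N" "\<And>x. x \<in> N \<Longrightarrow> \<theta> x = 1"
    and u: "u \<in> smooth_series A" "\<And>n. supp (u n) \<subseteq> N"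
  shows "star Mr u (series_of_fun \<theta>) = u"
proof (intro ext)
  fix n x
  have u_smooth: "smooth_fun A (u j)" for j
    using u(1) by (simp add: smooth_series_def)
  have \<theta>_1: "smooth_fun A (\<lambda>x. \<theta> x - 1)"
    by (rule smooth_fun_diff[OF atlas \<theta>(1) smooth_fun_const])
  have "supp (\<lambda>x. \<theta> x - 1) \<subseteq> - N"
    using \<theta>(2,3) by (intro supp_subset_closed) auto
  then have "supp (Mr r (u j) (\<lambda>x. \<theta> x - 1)) = {}" for r j
    using supp_Mr[OF u_smooth[of j] \<theta>_1, of r] u(2)[of j] by blast
  moreover have "Mr r (u j) \<theta> = Mr r (u j) (\<lambda>x. \<theta> x - 1)" if "r \<ge> 1" for r j
    using Mr_add_right[OF \<theta>_1 smooth_fun_const[where c=1] u_smooth[of j], where r=r]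
      Mr_const_right[OF that u_smooth[of j], of 1] by simp
  ultimately have "Mr r (u j) \<theta> x = 0" if "r \<ge> 1" for r j
    using that notin_supp_eq_0[of x "Mr r (u j) (\<lambda>x. \<theta> x - 1)"] by simp
  moreover have "u n x * \<theta> x = u n x"
    using \<theta>(3) u(2)[of n] notin_supp_eq_0[of x "u n"] by (cases "x \<in> N") auto
  ultimately show "star Mr u (series_of_fun \<theta>) n x = u n x"
    using star_series_of_fun_nth[OF u(1) \<theta>(1)] by simp
qed

lemma gns_ideal_nonzero_imp_constant_term_nonzero:
  assumes F: "F \<in> \<J>" "F \<noteq> (\<lambda>n x. 0)"
  obtains F' p where "F' \<in> \<J>" "F' 0 p \<noteq> 0"
proof -
  have F_cs: "F \<in> compact_series A" and F_0: "\<omega> (star Mr (series_cnj F) F) = 0"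
    using F(1) by (auto simp: gns_ideal_iff)
  have ex: "\<exists>n. F n \<noteq> (\<lambda>x. 0)"
    using F(2) by (auto simp: fun_eq_iff)
  define k where "k = (LEAST n. F n \<noteq> (\<lambda>x. 0))"
  define F' where "F' = (\<lambda>n. F (n + k))"
  have "F k \<noteq> (\<lambda>x. 0)"
    unfolding k_def by (rule LeastI_ex[OF ex])
  then obtain p where p: "F' 0 p \<noteq> 0"
    by (auto simp: F'_def fun_eq_iff)
  have F'_cs: "F' \<in> compact_series A"
    using F_cs by (simp add: compact_series_def F'_def)
  have F_low: "F j = (\<lambda>x. 0)" if "j < k" for j
    using not_less_Least[OF that[unfolded k_def]] by blast
  have F_shift: "F = series_shift k F'"
  proof (rule ext)
    fix n
    show "F n = series_shift k F' n"
      by (cases "k \<le> n") (simp_all add: series_shift_def F'_def F_low)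
  qed
  have "star Mr (series_cnj F) F = series_shift k (series_shift k (star Mr (series_cnj F') F'))"
    unfolding F_shift series_cnj_shift using F'_cs
    by (simp add: star_shift_left star_shift_right series_closed)
  then have "\<omega> (star Mr (series_cnj F) F) =
      fps_X ^ k * (fps_X ^ k * \<omega> (star Mr (series_cnj F') F'))"
    using F'_cs by (simp add: omega_shift series_closed)
  then have "F' \<in> \<J>"
    using F_0 F'_cs by (simp add: gns_ideal_iff)
  then show thesis
    using p that by blast
qed

lemma gns_ideal_absorbs_bump:
  assumes F: "F \<in> \<J>" "F 0 p \<noteq> 0"
  obtains \<beta> where "smooth_fun A \<beta>" "\<beta> p \<noteq> 0"
    "\<And>G. G \<in> compact_series A \<Longrightarrow> star Mr (series_of_fun \<beta>) G \<in> \<J>"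
proof -
  have F_ss: "F \<in> smooth_series A"
    using F(1) by (simp add: gns_ideal_iff series_closed)
  then have F0: "smooth_fun A (F 0)"
    by (simp add: smooth_series_def)
  obtain \<beta> N \<theta> g where \<beta>: "smooth_fun A \<beta>" "\<beta> p \<noteq> 0" "compact (supp \<beta>)" "supp \<beta> \<subseteq> N"
    and \<theta>: "open N" "smooth_fun A \<theta>" "\<And>x. x \<in> N \<Longrightarrow> \<theta> x = 1"
    and g: "smooth_fun A g" "\<And>x. x \<in> supp \<theta> \<Longrightarrow> g x * F 0 x = 1"
    using local_inverse_cutoffs[OF atlas F0 F(2)] by blast
  obtain e where e: "e \<in> smooth_series A" "star Mr e F = series_of_fun \<theta>"
    using star_left_inverse_exists[OF g(1) \<theta>(2) F_ss g(2)] .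
  have "star Mr (series_of_fun \<beta>) G \<in> \<J>" if G: "G \<in> compact_series A" for G
  proof -
    define u where "u = star Mr (series_of_fun \<beta>) G"
    have u: "u \<in> smooth_series A"
      unfolding u_def using \<beta>(1) G by (simp add: smooth_series_of_fun series_closed)
    have "supp (series_of_fun \<beta> s) \<subseteq> N" for s
      using \<beta>(4) by (cases "s = 0") (simp_all add: series_of_fun_def)
    then have "supp (u n) \<subseteq> N" for n
      using supp_star_subset[OF smooth_series_of_fun[OF \<beta>(1)]
          compact_series_imp_smooth_series[OF G], of n]
      unfolding u_def by blast
    then have "u = star Mr u (series_of_fun \<theta>)"
      using star_series_of_fun_eq_self[OF \<theta>(2,1,3) u] by simp
    also have "\<dots> = star Mr u (star Mr e F)"
      by (simp add: e(2))
    also have "\<dots> = star Mr (star Mr u e) F"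
      using u e(1) F_ss by (simp add: star_assoc)
    finally have "u = star Mr (star Mr u e) F" .
    moreover have "star Mr (star Mr u e) F \<in> \<J>"
      using u e(1) F(1) by (simp add: star_left_mem_gns_ideal smooth_series_star)
    ultimately show ?thesis
      by (simp add: u_def)
  qed
  then show thesis
    using that \<beta>(1,2) by blast
qed

lemma faithful_if_inj_gns_rep:
  assumes inj: "inj_on (gns_rep A Mr \<omega>) (smooth_series A)"
  shows "faithful_functional A Mr \<omega>"
proof (rule ccontr)
  assume "\<not> faithful_functional A Mr \<omega>"
  then obtain F where "F \<in> \<J>" "F \<noteq> (\<lambda>n x. 0)"
    using zero_mem_gns_ideal by (auto simp: faithful_functional_def)
  then obtain F' p where "F' \<in> \<J>" "F' 0 p \<noteq> 0"
    by (rule gns_ideal_nonzero_imp_constant_term_nonzero)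
  then obtain \<beta> where \<beta>: "smooth_fun A \<beta>" "\<beta> p \<noteq> 0"
    and absorbed: "\<And>G. G \<in> compact_series A \<Longrightarrow> star Mr (series_of_fun \<beta>) G \<in> \<J>"
    using gns_ideal_absorbs_bump by blast
  have "gns_rep A Mr \<omega> (series_of_fun \<beta>) = gns_rep A Mr \<omega> (\<lambda>n x. 0)"
  proof (rule ext)
    fix \<psi>
    show "gns_rep A Mr \<omega> (series_of_fun \<beta>) \<psi> = gns_rep A Mr \<omega> (\<lambda>n x. 0) \<psi>"
    proof (cases "\<psi> \<in> gns_space A Mr \<omega>")
      case True
      obtain G where G: "G \<in> compact_series A" "\<psi> = gns_vec A Mr \<omega> G"
        and rep: "\<forall>F. gns_rep A Mr \<omega> F \<psi> = gns_vec A Mr \<omega> (star Mr F G)"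
        using gns_rep_apply[OF True] .
      have "star Mr (\<lambda>n x. 0) G = (\<lambda>n x. 0)"
        using G Mr_zero_left by (simp add: star_nth compact_series_def fun_eq_iff)
      then show ?thesis
        using rep absorbed[OF G(1)] zero_mem_gns_ideal by (simp add: gns_vec_of_mem_gns_ideal)
    qed (simp add: gns_rep_def)
  qed
  then have "series_of_fun \<beta> = (\<lambda>n x. 0)"
    using inj_onD[OF inj] smooth_series_of_fun[OF \<beta>(1)]
      compact_series_imp_smooth_series[OF zero_compact_series] by blast
  then have "series_of_fun \<beta> 0 p = 0"
    by simp
  then show False
    using \<beta>(2) by (simp add: series_of_fun_def)
qed

end

theorem proposition7:
  fixes A :: "('m::{t2_space, second_countable_topology} set \<times> ('m \<Rightarrow> 'e::euclidean_space)) set"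
    and pb :: "('m \<Rightarrow> complex) \<Rightarrow> ('m \<Rightarrow> complex) \<Rightarrow> ('m \<Rightarrow> complex)"
    and Mr :: "nat \<Rightarrow> ('m \<Rightarrow> complex) \<Rightarrow> ('m \<Rightarrow> complex) \<Rightarrow> ('m \<Rightarrow> complex)"
    and \<omega> :: "'m fseries \<Rightarrow> complex fps"
  assumes "smooth_atlas A"
    and "poisson_bracket A pb"
    and "local_star_product A pb Mr"
    and "positive_functional A Mr \<omega>"
  shows "inj_on (gns_rep A Mr \<omega>) (smooth_series A) \<longleftrightarrow> faithful_functional A Mr \<omega>"
proof -
  interpret gns_setting A pb Mr \<omega>
    using assms(1,3,4) by unfold_locales
  show ?thesis
    using faithful_if_inj_gns_rep inj_gns_rep_if_faithful by blast
qed

end
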